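(* Let $K$ be a compact hypergroup and let $\sigma$ be an adapted probability measure on $K$. Then $H_\sigma(K)=\mathbb{C}\omega$, where $\omega$ is the normalized Haar measure on $K$.
   Context: $K$ is a compact hypergroup (Jewett/Bloom–Heyer sense) with involution $x\mapsto\check x$, assumed to have a left Haar measure; the normalized Haar measure $\omega$ is the Haar measure of total mass one. For $\sigma\in M(K)$, $H_\sigma(K)=\{\mu\in M(K):\sigma*\mu=\mu\}$. For subsets $A,B\subseteq K$, $A*B=\bigcup_{a\in A,b\in B}\operatorname{supp}(\delta_a*\delta_b)$, $A^n$ is the $n$-fold product and $\check A=\{\check a:a\in A\}$. A measure $\mu\in M(K)$ is adapted if $K=\overline{\bigcup_{n\geq1}\left(\operatorname{supp}|\mu|\cup(\operatorname{supp}|\mu|)\check{}\right)^n}$. *)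

theory Defs
  imports "HOL-Analysis.Analysis"
begin

text \<open>
The hypergroup K is the whole (compact Hausdorff) type 'a.
Since K is compact, the space M(K) of complex Radon measures is identified
(Riesz representation) with the bounded linear functionals on C(K)
(continuous complex-valued functions on K).  A functional is represented by a
map of type ('a => complex) => complex; only its values on C(K) matter.
The convolution of point measures delta_x * delta_y is given by the
parameter conv: conv x y is the functional f |-> (delta_x * delta_y)(f),
i.e. "f(x*y)".
\<close>

definition CK :: "('a::topological_space \<Rightarrow> complex) set" where
  "CK = {f. continuous_on UNIV f}"

definition supnorm :: "('a \<Rightarrow> complex) \<Rightarrow> real" where
  "supnorm f = (SUP x. norm (f x))"

definition lin_on_CK :: "(('a::topological_space \<Rightarrow> complex) \<Rightarrow> complex) \<Rightarrow> bool" where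
  "lin_on_CK \<phi> \<longleftrightarrow>
     (\<forall>f\<in>CK. \<forall>g\<in>CK. \<phi> (\<lambda>x. f x + g x) = \<phi> f + \<phi> g) \<and>
     (\<forall>f\<in>CK. \<forall>c. \<phi> (\<lambda>x. c * f x) = c * \<phi> f)"

definition cmeasure :: "(('a::topological_space \<Rightarrow> complex) \<Rightarrow> complex) \<Rightarrow> bool" where
  "cmeasure \<mu> \<longleftrightarrow> lin_on_CK \<mu> \<and> (\<exists>B. \<forall>f\<in>CK. norm (\<mu> f) \<le> B * supnorm f)"

definition positive_fun :: "(('a::topological_space \<Rightarrow> complex) \<Rightarrow> complex) \<Rightarrow> bool" where
  "positive_fun \<mu> \<longleftrightarrow>
     (\<forall>f\<in>CK. (\<forall>x. f x = complex_of_real (Re (f x)) \<and> Re (f x) \<ge> 0) \<longrightarrow>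
        \<mu> f = complex_of_real (Re (\<mu> f)) \<and> Re (\<mu> f) \<ge> 0)"

definition prob_fun :: "(('a::topological_space \<Rightarrow> complex) \<Rightarrow> complex) \<Rightarrow> bool" where
  "prob_fun \<mu> \<longleftrightarrow> lin_on_CK \<mu> \<and> positive_fun \<mu> \<and> \<mu> (\<lambda>_. 1) = 1"

text \<open>Support of a measure: complement of the largest open set on which it vanishes.
 (For a complex measure mu this coincides with supp |mu|.)\<close>
definition msupp :: "(('a::topological_space \<Rightarrow> complex) \<Rightarrow> complex) \<Rightarrow> 'a set" where
  "msupp \<mu> = - \<Union>{U. open U \<and>
       (\<forall>f\<in>CK. closure {y. f y \<noteq> 0} \<subseteq> U \<longrightarrow> \<mu> f = 0)}"

definition mconv ::
  "('a \<Rightarrow> 'a \<Rightarrow> ('a \<Rightarrow> complex) \<Rightarrow> complex) \<Rightarrow>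
   (('a \<Rightarrow> complex) \<Rightarrow> complex) \<Rightarrow> (('a \<Rightarrow> complex) \<Rightarrow> complex) \<Rightarrow>
   ('a \<Rightarrow> complex) \<Rightarrow> complex" where
  "mconv conv \<mu> \<nu> f = \<mu> (\<lambda>x. \<nu> (\<lambda>y. conv x y f))"

text \<open>Compact hypergroup (Jewett / Bloom--Heyer axioms, stated for point measures).\<close>
definition compact_hypergroup ::
  "('a::t2_space \<Rightarrow> 'a \<Rightarrow> ('a \<Rightarrow> complex) \<Rightarrow> complex) \<Rightarrow> 'a \<Rightarrow> ('a \<Rightarrow> 'a) \<Rightarrow> bool" where
  "compact_hypergroup conv e invo \<longleftrightarrow>
     compact (UNIV :: 'a set) \<and>
     \<comment> \<open>delta_x * delta_y is a probability measure (compact support automatic)\<close>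
     (\<forall>x y. prob_fun (conv x y)) \<and>
     \<comment> \<open>associativity: (delta_x*delta_y)*delta_z = delta_x*(delta_y*delta_z)\<close>
     (\<forall>x y z. \<forall>f\<in>CK. conv x y (\<lambda>u. conv u z f) = conv y z (\<lambda>v. conv x v f)) \<and>
     \<comment> \<open>(x,y) |-> delta_x*delta_y is continuous (weak topology = cone topology, K compact)\<close>
     (\<forall>f\<in>CK. continuous_on UNIV (\<lambda>p. conv (fst p) (snd p) f)) \<and>
     \<comment> \<open>(x,y) |-> supp(delta_x*delta_y) continuous for the Michael (Vietoris) topology\<close>
     (\<forall>U. open U \<longrightarrow>
        open {p. msupp (conv (fst p) (snd p)) \<subseteq> U} \<and>
        open {p. msupp (conv (fst p) (snd p)) \<inter> U \<noteq> {}}) \<and>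
     \<comment> \<open>identity: delta_e * delta_x = delta_x * delta_e = delta_x\<close>
     (\<forall>x. \<forall>f\<in>CK. conv e x f = f x \<and> conv x e f = f x) \<and>
     \<comment> \<open>involution: continuous, involutive, anti-homomorphic\<close>
     continuous_on UNIV invo \<and> (\<forall>x. invo (invo x) = x) \<and>
     (\<forall>x y. \<forall>f\<in>CK. conv x y (f \<circ> invo) = conv (invo y) (invo x) f) \<and>
     \<comment> \<open>e in supp(delta_x*delta_y) iff x = invo y\<close>
     (\<forall>x y. e \<in> msupp (conv x y) \<longleftrightarrow> x = invo y)"

definition normalized_haar ::
  "('a::topological_space \<Rightarrow> 'a \<Rightarrow> ('a \<Rightarrow> complex) \<Rightarrow> complex) \<Rightarrow>
   (('a \<Rightarrow> complex) \<Rightarrow> complex) \<Rightarrow> bool" where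
  "normalized_haar conv \<omega> \<longleftrightarrow> prob_fun \<omega> \<and>
     (\<forall>x. \<forall>f\<in>CK. \<omega> (\<lambda>y. conv x y f) = \<omega> f)"

definition set_conv ::
  "('a::topological_space \<Rightarrow> 'a \<Rightarrow> ('a \<Rightarrow> complex) \<Rightarrow> complex) \<Rightarrow> 'a set \<Rightarrow> 'a set \<Rightarrow> 'a set" where
  "set_conv conv A B = (\<Union>a\<in>A. \<Union>b\<in>B. msupp (conv a b))"

fun set_pow ::
  "('a::topological_space \<Rightarrow> 'a \<Rightarrow> ('a \<Rightarrow> complex) \<Rightarrow> complex) \<Rightarrow> 'a set \<Rightarrow> nat \<Rightarrow> 'a set" where
  "set_pow conv A 0 = A"   \<comment> \<open>unused index; A^n for n >= 1 is set_pow conv A n\<close>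
| "set_pow conv A (Suc 0) = A"
| "set_pow conv A (Suc (Suc n)) = set_conv conv (set_pow conv A (Suc n)) A"

definition adapted ::
  "('a::topological_space \<Rightarrow> 'a \<Rightarrow> ('a \<Rightarrow> complex) \<Rightarrow> complex) \<Rightarrow> ('a \<Rightarrow> 'a) \<Rightarrow>
   (('a \<Rightarrow> complex) \<Rightarrow> complex) \<Rightarrow> bool" where
  "adapted conv invo \<mu> \<longleftrightarrow>
     UNIV = closure (\<Union>n\<in>{1..}. set_pow conv (msupp \<mu> \<union> invo ` msupp \<mu>) n)"

definition H_sigma ::
  "('a::topological_space \<Rightarrow> 'a \<Rightarrow> ('a \<Rightarrow> complex) \<Rightarrow> complex) \<Rightarrow>
   (('a \<Rightarrow> complex) \<Rightarrow> complex) \<Rightarrow> (('a \<Rightarrow> complex) \<Rightarrow> complex) set" where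
  "H_sigma conv \<sigma> = {\<mu>. cmeasure \<mu> \<and> (\<forall>f\<in>CK. mconv conv \<sigma> \<mu> f = \<mu> f)}"

end

theory Submission
  imports Defs
begin

text \<open>
  Let \<open>\<sigma> * \<mu> = \<mu>\<close>. For \<open>f \<in> C(K)\<close> the function \<open>F z = \<mu>(y \<mapsto> (\<delta>\<^sub>z * \<delta>\<^sub>y)(f))\<close> is
  continuous and \<open>\<sigma>\<close>-harmonic: \<open>F z = \<integral> (\<delta>\<^sub>z * \<delta>\<^sub>x)(F) d\<sigma>(x)\<close>. A real continuous
  \<open>\<sigma>\<close>-harmonic function \<open>u\<close> is constant: its energy
  \<open>z \<mapsto> \<integral> (\<delta>\<^sub>z * \<delta>\<^sub>x)((u - u z)\<^sup>2) d\<sigma>(x)\<close> equals \<open>P\<^sub>\<sigma>(u\<^sup>2) - u\<^sup>2\<close>, whose integral against the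
  (also right invariant) Haar measure vanishes; as \<open>\<omega>\<close> has full support, the energy vanishes
  everywhere. So \<open>supp \<sigma>\<close> consists of periods of \<open>u\<close>, i.e. points \<open>x\<close> with \<open>u \<equiv> u t\<close> on
  \<open>supp (\<delta>\<^sub>t * \<delta>\<^sub>x)\<close> for all \<open>t\<close>. The periods form a closed set stable under products and,
  by reciprocity of supports, under the involution; adaptedness makes it all of \<open>K\<close>.
  Hence \<open>F\<close> is constant, i.e. \<open>\<mu>\<close> is left invariant, and uniqueness of the Haar measure
  gives \<open>\<mu> = \<mu>(1) \<omega>\<close>.

  Measures are bounded linear functionals on \<open>C(K)\<close>; the Fubini theorem needed twice
  above is obtained from the Stone--Weierstrass theorem.
\<close>

section \<open>Linear functionals on \<open>C(K)\<close>\<close>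

lemma CK_const [simp]: "(\<lambda>_. c) \<in> CK"
  by (simp add: CK_def)

lemma CK_diff: "f \<in> CK \<Longrightarrow> g \<in> CK \<Longrightarrow> (\<lambda>x. f x - g x) \<in> CK"
  by (simp add: CK_def continuous_on_diff)

lemma CK_cmult: "f \<in> CK \<Longrightarrow> (\<lambda>x. c * f x) \<in> CK"
  by (simp add: CK_def continuous_on_mult)

lemma CK_of_real: "continuous_on UNIV r \<Longrightarrow> (\<lambda>x. complex_of_real (r x)) \<in> CK"
  unfolding CK_def mem_Collect_eq by (intro continuous_intros)

lemma CK_continuous_Re: "f \<in> CK \<Longrightarrow> continuous_on UNIV (\<lambda>x. Re (f x))"
  unfolding CK_def mem_Collect_eq by (intro continuous_intros)

lemma CK_continuous_Im: "f \<in> CK \<Longrightarrow> continuous_on UNIV (\<lambda>x. Im (f x))"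
  unfolding CK_def mem_Collect_eq by (intro continuous_intros)

lemma continuous_on_if_of_real_CK: "(\<lambda>x. complex_of_real (r x)) \<in> CK \<Longrightarrow> continuous_on UNIV r"
  using CK_continuous_Re by fastforce

lemma CK_compose: "f \<in> CK \<Longrightarrow> continuous_on UNIV g \<Longrightarrow> (\<lambda>x. f (g x)) \<in> CK"
  unfolding CK_def using continuous_on_compose2[of UNIV f UNIV g] by auto

lemma norm_le_supnorm:
  fixes f :: "'a::topological_space \<Rightarrow> complex"
  assumes "compact (UNIV::'a set)" "f \<in> CK"
  shows "norm (f x) \<le> supnorm f"
proof -
  have "compact (range f)" using assms compact_continuous_image by (auto simp: CK_def)
  then have "bounded (range f)" by (rule compact_imp_bounded)
  then obtain B where "\<forall>y. norm (f y) \<le> B" by (auto simp: bounded_iff)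
  then have "bdd_above (range (\<lambda>y. norm (f y)))" by (auto intro: bdd_aboveI2)
  then show ?thesis unfolding supnorm_def by (rule cSUP_upper[OF UNIV_I])
qed

lemma supnorm_le: "(\<And>x. norm (f x) \<le> B) \<Longrightarrow> supnorm f \<le> B"
  unfolding supnorm_def by (rule cSUP_least) auto

lemma supnorm_nonneg:
  fixes f :: "'a::topological_space \<Rightarrow> complex"
  assumes "compact (UNIV::'a set)" "f \<in> CK"
  shows "0 \<le> supnorm f"
  using norm_le_supnorm[OF assms] norm_ge_zero order_trans by blast

lemma lin_on_CK_add: "lin_on_CK \<phi> \<Longrightarrow> f \<in> CK \<Longrightarrow> g \<in> CK \<Longrightarrow> \<phi> (\<lambda>x. f x + g x) = \<phi> f + \<phi> g"
  by (simp add: lin_on_CK_def)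

lemma lin_on_CK_cmult: "lin_on_CK \<phi> \<Longrightarrow> f \<in> CK \<Longrightarrow> \<phi> (\<lambda>x. c * f x) = c * \<phi> f"
  by (simp add: lin_on_CK_def)

lemma lin_on_CK_uminus: "lin_on_CK \<phi> \<Longrightarrow> f \<in> CK \<Longrightarrow> \<phi> (\<lambda>x. - f x) = - \<phi> f"
  using lin_on_CK_cmult[of \<phi> f "-1"] by simp

lemma lin_on_CK_diff:
  assumes "lin_on_CK \<phi>" "f \<in> CK" "g \<in> CK"
  shows "\<phi> (\<lambda>x. f x - g x) = \<phi> f - \<phi> g"
  using lin_on_CK_add[OF assms(1,2) CK_cmult[OF assms(3), of "-1"]] lin_on_CK_uminus[OF assms(1,3)]
  by simp

lemma lin_on_CK_zero: "lin_on_CK \<phi> \<Longrightarrow> \<phi> (\<lambda>x. 0) = 0"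
  using lin_on_CK_cmult[of \<phi> "\<lambda>_. 1" 0] by simp

lemma lin_on_CK_const: "lin_on_CK \<phi> \<Longrightarrow> \<phi> (\<lambda>x. c) = c * \<phi> (\<lambda>_. 1)"
  using lin_on_CK_cmult[of \<phi> "\<lambda>_. 1" c] by simp

lemma lin_on_CK_sum:
  assumes "lin_on_CK \<phi>" "finite D" "\<And>i. i \<in> D \<Longrightarrow> g i \<in> CK"
  shows "\<phi> (\<lambda>x. \<Sum>i\<in>D. g i x) = (\<Sum>i\<in>D. \<phi> (g i))"
  using assms(2,3)
proof (induction D rule: finite_induct)
  case empty
  then show ?case using lin_on_CK_zero[OF assms(1)] by simp
next
  case (insert a D)
  have "(\<lambda>x. \<Sum>i\<in>D. g i x) \<in> CK"
    using insert unfolding CK_def mem_Collect_eq by (intro continuous_on_sum) auto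
  then show ?case using insert lin_on_CK_add[OF assms(1), of "g a" "\<lambda>x. \<Sum>i\<in>D. g i x"] by simp
qed

lemma lin_on_CK_lincomb:
  assumes "lin_on_CK \<phi>" "f \<in> CK" "g \<in> CK"
  shows "\<phi> (\<lambda>x. f x - c * g x + d) = \<phi> f - c * \<phi> g + d * \<phi> (\<lambda>_. 1)"
proof -
  have "(\<lambda>x. f x - c * g x) \<in> CK" using assms by (intro CK_diff CK_cmult)
  then show ?thesis
    using lin_on_CK_add[OF assms(1) _ CK_const, of "\<lambda>x. f x - c * g x" d]
      lin_on_CK_diff[OF assms(1,2) CK_cmult[OF assms(3)]] lin_on_CK_cmult[OF assms(1,3)]
      lin_on_CK_const[OF assms(1), of d]
    by simp
qed

lemma lin_on_CK_square_shift:
  assumes "lin_on_CK \<phi>" "continuous_on UNIV u"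
  shows "\<phi> (\<lambda>v. complex_of_real ((u v - c)\<^sup>2)) =
     \<phi> (\<lambda>v. complex_of_real ((u v)\<^sup>2)) - complex_of_real (2 * c) * \<phi> (\<lambda>v. complex_of_real (u v))
       + complex_of_real (c\<^sup>2) * \<phi> (\<lambda>_. 1)"
proof -
  have "(\<lambda>v. complex_of_real ((u v - c)\<^sup>2)) = (\<lambda>v. complex_of_real ((u v)\<^sup>2)
      - complex_of_real (2 * c) * complex_of_real (u v) + complex_of_real (c\<^sup>2))"
    by (rule ext) (simp add: power2_eq_square algebra_simps)
  moreover have "(\<lambda>v. complex_of_real ((u v)\<^sup>2)) \<in> CK" "(\<lambda>v. complex_of_real (u v)) \<in> CK"
    by (intro CK_of_real continuous_intros assms(2))+
  ultimately show ?thesis by (simp only: lin_on_CK_lincomb[OF assms(1)])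
qed

lemma cmeasure_lin: "cmeasure \<phi> \<Longrightarrow> lin_on_CK \<phi>"
  by (simp add: cmeasure_def)

lemma cmeasure_bound:
  fixes \<phi> :: "('a::topological_space \<Rightarrow> complex) \<Rightarrow> complex"
  assumes "compact (UNIV::'a set)" "cmeasure \<phi>"
  obtains B where "B \<ge> 0" "\<And>f. f \<in> CK \<Longrightarrow> norm (\<phi> f) \<le> B * supnorm f"
proof -
  obtain B where B: "\<forall>f\<in>CK. norm (\<phi> f) \<le> B * supnorm f" using assms(2) by (auto simp: cmeasure_def)
  show ?thesis
  proof (rule that[of "max B 0"])
    fix f :: "'a \<Rightarrow> complex" assume f: "f \<in> CK"
    have "B * supnorm f \<le> max B 0 * supnorm f"
      using supnorm_nonneg[OF assms(1) f] by (intro mult_right_mono) auto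
    then show "norm (\<phi> f) \<le> max B 0 * supnorm f" using B f by force
  qed simp
qed

definition positive_lin :: "(('a::topological_space \<Rightarrow> complex) \<Rightarrow> complex) \<Rightarrow> bool" where
  "positive_lin \<phi> \<longleftrightarrow> lin_on_CK \<phi> \<and> positive_fun \<phi>"

definition nonneg_CK :: "('a::topological_space \<Rightarrow> complex) \<Rightarrow> bool" where
  "nonneg_CK f \<longleftrightarrow> f \<in> CK \<and> (\<forall>x. f x = complex_of_real (Re (f x)) \<and> 0 \<le> Re (f x))"

lemma prob_fun_positive_lin: "prob_fun \<phi> \<Longrightarrow> positive_lin \<phi>"
  by (simp add: prob_fun_def positive_lin_def)

lemma positive_lin_lin: "positive_lin \<phi> \<Longrightarrow> lin_on_CK \<phi>"
  by (simp add: positive_lin_def)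

lemma positive_lin_nonneg:
  "positive_lin \<phi> \<Longrightarrow> nonneg_CK f \<Longrightarrow> \<phi> f = complex_of_real (Re (\<phi> f)) \<and> 0 \<le> Re (\<phi> f)"
  unfolding positive_lin_def nonneg_CK_def positive_fun_def by blast

lemma nonneg_CK_of_real:
  "continuous_on UNIV r \<Longrightarrow> (\<And>x. 0 \<le> r x) \<Longrightarrow> nonneg_CK (\<lambda>x. complex_of_real (r x))"
  unfolding nonneg_CK_def by (auto intro: CK_of_real)

lemma nonneg_CK_sq_dev:
  "continuous_on UNIV u \<Longrightarrow> nonneg_CK (\<lambda>v. complex_of_real ((u v - c)\<^sup>2))"
  by (intro nonneg_CK_of_real continuous_intros) auto

lemma nonneg_CK_eq_of_real: "nonneg_CK f \<Longrightarrow> f = (\<lambda>x. complex_of_real (Re (f x)))"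
  unfolding nonneg_CK_def by (auto intro!: ext)

lemma nonneg_CK_CK: "nonneg_CK f \<Longrightarrow> f \<in> CK"
  unfolding nonneg_CK_def by blast

lemma positive_lin_real:
  assumes "positive_lin \<phi>" "continuous_on UNIV r"
  shows "\<phi> (\<lambda>x. complex_of_real (r x)) = complex_of_real (Re (\<phi> (\<lambda>x. complex_of_real (r x))))"
proof -
  let ?p = "\<lambda>x. complex_of_real (max (r x) 0)" and ?n = "\<lambda>x. complex_of_real (max (- r x) 0)"
  have nonneg: "nonneg_CK ?p" "nonneg_CK ?n"
    using assms(2) by (auto intro!: nonneg_CK_of_real continuous_intros)
  have "(\<lambda>x. complex_of_real (r x)) = (\<lambda>x. ?p x - ?n x)"
    by (rule ext) (simp add: max_def)
  then have "\<phi> (\<lambda>x. complex_of_real (r x)) = \<phi> ?p - \<phi> ?n"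
    using lin_on_CK_diff[OF positive_lin_lin[OF assms(1)] nonneg_CK_CK[OF nonneg(1)] nonneg_CK_CK[OF nonneg(2)]]
    by simp
  moreover have "\<phi> ?p = complex_of_real (Re (\<phi> ?p))" "\<phi> ?n = complex_of_real (Re (\<phi> ?n))"
    using positive_lin_nonneg[OF assms(1)] nonneg by blast+
  ultimately show ?thesis by (metis Re_complex_of_real of_real_diff)
qed

lemma positive_lin_mono:
  assumes "positive_lin \<phi>" "continuous_on UNIV r" "continuous_on UNIV s" "\<And>x. r x \<le> s x"
  shows "Re (\<phi> (\<lambda>x. complex_of_real (r x))) \<le> Re (\<phi> (\<lambda>x. complex_of_real (s x)))"
proof -
  have "nonneg_CK (\<lambda>x. complex_of_real (s x - r x))"
    using assms by (intro nonneg_CK_of_real continuous_intros) auto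
  then have "0 \<le> Re (\<phi> (\<lambda>x. complex_of_real (s x - r x)))"
    using positive_lin_nonneg[OF assms(1)] by blast
  moreover have "\<phi> (\<lambda>x. complex_of_real (s x - r x)) =
      \<phi> (\<lambda>x. complex_of_real (s x)) - \<phi> (\<lambda>x. complex_of_real (r x))"
    using lin_on_CK_diff[OF positive_lin_lin[OF assms(1)] CK_of_real[OF assms(3)] CK_of_real[OF assms(2)]]
    by simp
  ultimately show ?thesis by simp
qed

lemma positive_lin_Re_Im:
  assumes "positive_lin \<phi>" "f \<in> CK"
  shows "\<phi> (\<lambda>x. complex_of_real (Re (f x))) = complex_of_real (Re (\<phi> f))"
    and "\<phi> (\<lambda>x. complex_of_real (Im (f x))) = complex_of_real (Im (\<phi> f))"
proof -
  let ?re = "\<lambda>x. complex_of_real (Re (f x))" and ?im = "\<lambda>x. complex_of_real (Im (f x))"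
  have CK: "?re \<in> CK" "?im \<in> CK"
    using assms(2) by (auto intro!: CK_of_real CK_continuous_Re CK_continuous_Im)
  have "f = (\<lambda>x. ?re x + \<i> * ?im x)"
    by (rule ext) (simp add: complex_eq_iff)
  then have "\<phi> f = \<phi> ?re + \<i> * \<phi> ?im"
    using CK lin_on_CK_add[OF positive_lin_lin[OF assms(1)]]
      lin_on_CK_cmult[OF positive_lin_lin[OF assms(1)]] CK_cmult
    by metis
  moreover obtain a b where "\<phi> ?re = complex_of_real a" "\<phi> ?im = complex_of_real b"
    using positive_lin_real[OF assms(1) CK_continuous_Re[OF assms(2)]]
      positive_lin_real[OF assms(1) CK_continuous_Im[OF assms(2)]] by blast
  ultimately show "\<phi> ?re = complex_of_real (Re (\<phi> f))" "\<phi> ?im = complex_of_real (Im (\<phi> f))"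
    by simp_all
qed

lemma positive_lin_norm_le:
  assumes "positive_lin \<phi>" "f \<in> CK" "continuous_on UNIV h" "\<And>x. norm (f x) \<le> h x"
  shows "norm (\<phi> f) \<le> 2 * Re (\<phi> (\<lambda>x. complex_of_real (h x)))"
proof -
  let ?H = "Re (\<phi> (\<lambda>x. complex_of_real (h x)))"
  have abs_le: "\<bar>Re (\<phi> (\<lambda>x. complex_of_real (g x)))\<bar> \<le> ?H"
    if g: "continuous_on UNIV g" "\<And>x. \<bar>g x\<bar> \<le> h x" for g
  proof -
    have "- h x \<le> g x" for x
      using g(2)[of x] by linarith
    then have "Re (\<phi> (\<lambda>x. complex_of_real (- h x))) \<le> Re (\<phi> (\<lambda>x. complex_of_real (g x)))"
      using g(1) assms(3) by (intro positive_lin_mono[OF assms(1)] continuous_intros)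
    moreover have "Re (\<phi> (\<lambda>x. complex_of_real (g x))) \<le> ?H"
      by (rule positive_lin_mono[OF assms(1) g(1) assms(3)]) (meson abs_le_D1 g(2))
    moreover have "\<phi> (\<lambda>x. complex_of_real (- h x)) = - \<phi> (\<lambda>x. complex_of_real (h x))"
      using lin_on_CK_uminus[OF positive_lin_lin[OF assms(1)] CK_of_real[OF assms(3)]] by simp
    ultimately show ?thesis by simp
  qed
  have "\<bar>Re (\<phi> (\<lambda>x. complex_of_real (Re (f x))))\<bar> \<le> ?H"
    using CK_continuous_Re[OF assms(2)] assms(4) abs_Re_le_cmod order_trans by (intro abs_le) blast+
  moreover have "\<bar>Re (\<phi> (\<lambda>x. complex_of_real (Im (f x))))\<bar> \<le> ?H"
    using CK_continuous_Im[OF assms(2)] assms(4) abs_Im_le_cmod order_trans by (intro abs_le) blast+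
  ultimately have "\<bar>Re (\<phi> f)\<bar> + \<bar>Im (\<phi> f)\<bar> \<le> 2 * ?H"
    using positive_lin_Re_Im[OF assms(1,2)] by simp
  then show ?thesis using cmod_le[of "\<phi> f"] by linarith
qed

lemma positive_lin_cmeasure:
  fixes \<phi> :: "('a::topological_space \<Rightarrow> complex) \<Rightarrow> complex"
  assumes cpt: "compact (UNIV::'a set)" and ph: "positive_lin \<phi>"
  shows "cmeasure \<phi>"
proof -
  have "norm (\<phi> f) \<le> (2 * Re (\<phi> (\<lambda>_. 1))) * supnorm f" if f: "f \<in> CK" for f
  proof -
    have "norm (\<phi> f) \<le> 2 * Re (\<phi> (\<lambda>x. complex_of_real (supnorm f)))"
      by (rule positive_lin_norm_le[OF ph f]) (auto intro: norm_le_supnorm[OF cpt f])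
    also have "\<phi> (\<lambda>x. complex_of_real (supnorm f)) = complex_of_real (supnorm f) * \<phi> (\<lambda>_. 1)"
      by (rule lin_on_CK_const[OF positive_lin_lin[OF ph]])
    finally show ?thesis by (simp add: mult.commute)
  qed
  then show ?thesis unfolding cmeasure_def using positive_lin_lin[OF ph] by blast
qed

lemma positive_lin_eq_0_if_null_majorant:
  fixes \<phi> :: "('a::topological_space \<Rightarrow> complex) \<Rightarrow> complex"
  assumes cpt: "compact (UNIV::'a set)" and ph: "positive_lin \<phi>" and f: "f \<in> CK"
    and h: "continuous_on UNIV h" "\<And>x. 0 \<le> h x" "\<phi> (\<lambda>x. complex_of_real (h x)) = 0"
    and \<delta>: "0 < \<delta>" "\<And>x. f x \<noteq> 0 \<Longrightarrow> \<delta> \<le> h x"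
  shows "\<phi> f = 0"
proof -
  define k where "k = supnorm f / \<delta>"
  have k: "0 \<le> k" unfolding k_def using supnorm_nonneg[OF cpt f] \<delta>(1) by simp
  have "norm (f x) \<le> k * h x" for x
  proof (cases "f x = 0")
    case False
    have "norm (f x) \<le> k * \<delta>" using norm_le_supnorm[OF cpt f] \<delta>(1) by (simp add: k_def)
    also have "\<dots> \<le> k * h x" using \<delta>(2)[OF False] k by (rule mult_left_mono)
    finally show ?thesis .
  qed (use k h(2) in simp)
  then have "norm (\<phi> f) \<le> 2 * Re (\<phi> (\<lambda>x. complex_of_real (k * h x)))"
    using h(1) by (intro positive_lin_norm_le[OF ph f] continuous_intros)
  also have "\<phi> (\<lambda>x. complex_of_real (k * h x)) = complex_of_real k * \<phi> (\<lambda>x. complex_of_real (h x))"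
    using lin_on_CK_cmult[OF positive_lin_lin[OF ph] CK_of_real[OF h(1)], of "complex_of_real k"] by simp
  finally show ?thesis using h(3) by simp
qed

section \<open>Urysohn functions on a compact Hausdorff space\<close>

lemma Hausdorff_space_euclidean_t2: "Hausdorff_space (euclidean :: 'a::t2_space topology)"
  unfolding Hausdorff_space_def disjnt_def by (simp add: separation_t2)

lemma Urysohn_compact:
  fixes S T :: "'a::t2_space set"
  assumes "compact (UNIV::'a set)" "closed S" "closed T" "S \<inter> T = {}"
  obtains f :: "'a \<Rightarrow> real" where "continuous_on UNIV f" "\<forall>x. 0 \<le> f x \<and> f x \<le> 1"
    "\<forall>x\<in>S. f x = 0" "\<forall>x\<in>T. f x = 1"
proof -
  have "normal_space (euclidean :: 'a topology)"
    using assms(1) Hausdorff_space_euclidean_t2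
    by (intro compact_Hausdorff_or_regular_imp_normal_space)
      (auto simp: compact_space_def compactin_euclidean_iff)
  then obtain f where f: "continuous_map euclidean (top_of_set {0..1::real}) f"
      "f ` S \<subseteq> {0}" "f ` T \<subseteq> {1}"
    using Urysohn_lemma[of euclidean S T 0 1] assms by (auto simp: disjnt_def)
  then show ?thesis by (intro that[of f]) (auto simp: continuous_map_in_subtopology)
qed

lemma Urysohn_bump:
  fixes U :: "'a::t2_space set"
  assumes cpt: "compact (UNIV::'a set)" and "open U" "v \<in> U"
  obtains r :: "'a \<Rightarrow> real" where "continuous_on UNIV r" "\<forall>x. 0 \<le> r x" "r v = 1"
    "closure {x. r x \<noteq> 0} \<subseteq> U"
proof -
  obtain f :: "'a \<Rightarrow> real" where f: "continuous_on UNIV f" "\<forall>x. 0 \<le> f x \<and> f x \<le> 1"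
      "\<forall>x\<in>-U. f x = 0" "\<forall>x\<in>{v}. f x = 1"
    using Urysohn_compact[OF cpt, of "-U" "{v}"] assms by auto
  have closed: "closed {x. f x \<le> 1/2}" "closed {x. 1/2 \<le> f x}"
    by (intro closed_Collect_le continuous_intros f(1))+
  obtain g :: "'a \<Rightarrow> real" where g: "continuous_on UNIV g" "\<forall>x. 0 \<le> g x \<and> g x \<le> 1"
      "\<forall>x\<in>{x. f x \<le> 1/2}. g x = 0" "\<forall>x\<in>{v}. g x = 1"
    using Urysohn_compact[OF cpt closed(1), of "{v}"] f by auto
  have "closure {x. g x \<noteq> 0} \<subseteq> {x. 1/2 \<le> f x}"
    using g(3) by (intro closure_minimal closed(2)) force
  also have "\<dots> \<subseteq> U" using f(3) by force
  finally show ?thesis using g by (intro that[of g]) auto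
qed

lemma separate_point_closed:
  fixes C :: "'a::t2_space set"
  assumes cpt: "compact (UNIV::'a set)" and "closed C" "v \<notin> C"
  obtains A W where "open A" "open W" "v \<in> A" "C \<subseteq> W" "A \<inter> W = {}"
proof -
  obtain h :: "'a \<Rightarrow> real" where h: "continuous_on UNIV h" "\<forall>x. 0 \<le> h x \<and> h x \<le> 1"
      "\<forall>z\<in>C. h z = 0" "\<forall>z\<in>{v}. h z = 1"
    by (rule Urysohn_compact[OF cpt \<open>closed C\<close> closed_singleton]) (use assms(3) in auto)
  have "open {x. 1/2 < h x}" "open {x. h x < 1/2}"
    by (intro open_Collect_less continuous_on_const h(1))+
  then show ?thesis using h(3,4) by (intro that[of "{x. 1/2 < h x}" "{x. h x < 1/2}"]) auto
qed

lemma continuous_separating_compact_t2: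
  fixes x y :: "'a::t2_space"
  assumes "compact (UNIV::'a set)" "x \<noteq> y"
  shows "\<exists>h :: 'a \<Rightarrow> real. continuous_on UNIV h \<and> h x \<noteq> h y"
proof -
  obtain h :: "'a \<Rightarrow> real" where "continuous_on UNIV h" "\<forall>x. 0 \<le> h x \<and> h x \<le> 1"
      "\<forall>z\<in>{x}. h z = 0" "\<forall>z\<in>{y}. h z = 1"
    by (rule Urysohn_compact[OF assms(1) closed_singleton closed_singleton, of x y]) (use assms(2) in auto)
  then show ?thesis by auto
qed

section \<open>Supports\<close>

definition null_on :: "(('a::topological_space \<Rightarrow> complex) \<Rightarrow> complex) \<Rightarrow> 'a set \<Rightarrow> bool" where
  "null_on \<phi> U \<longleftrightarrow> (\<forall>f\<in>CK. closure {y. f y \<noteq> 0} \<subseteq> U \<longrightarrow> \<phi> f = 0)"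

lemma msupp_eq: "msupp \<phi> = - \<Union>{U. open U \<and> null_on \<phi> U}"
  unfolding msupp_def null_on_def ..

lemma closed_msupp: "closed (msupp \<phi>)"
  unfolding msupp_eq by (intro open_Union closed_Compl) auto

lemma notin_msupp_iff: "v \<notin> msupp \<phi> \<longleftrightarrow> (\<exists>U. open U \<and> v \<in> U \<and> null_on \<phi> U)"
  unfolding msupp_eq by blast

lemma msupp_cong:
  assumes "\<And>f. f \<in> CK \<Longrightarrow> \<phi> f = \<psi> f"
  shows "msupp \<phi> = msupp \<psi>"
proof -
  have "null_on \<phi> = null_on \<psi>" by (rule ext) (simp add: null_on_def assms)
  then show ?thesis by (simp add: msupp_eq)
qed

lemma notin_msupp_witness:
  fixes \<phi> :: "('a::t2_space \<Rightarrow> complex) \<Rightarrow> complex"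
  assumes cpt: "compact (UNIV::'a set)" and "v \<notin> msupp \<phi>"
  obtains r :: "'a \<Rightarrow> real" where "continuous_on UNIV r" "\<forall>x. 0 \<le> r x" "r v = 1"
    "\<phi> (\<lambda>x. complex_of_real (r x)) = 0"
proof -
  obtain U where U: "open U" "v \<in> U" "null_on \<phi> U" using assms(2) notin_msupp_iff by blast
  obtain r :: "'a \<Rightarrow> real" where r: "continuous_on UNIV r" "\<forall>x. 0 \<le> r x" "r v = 1"
      "closure {x. r x \<noteq> 0} \<subseteq> U"
    using Urysohn_bump[OF cpt U(1,2)] by blast
  then have "\<phi> (\<lambda>x. complex_of_real (r x)) = 0"
    using U(3) CK_of_real[OF r(1)] unfolding null_on_def by simp
  with r show ?thesis by (intro that)
qed

lemma positive_lin_neq_0_on_msupp: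
  fixes \<phi> :: "('a::t2_space \<Rightarrow> complex) \<Rightarrow> complex"
  assumes cpt: "compact (UNIV::'a set)" and ph: "positive_lin \<phi>" and v: "v \<in> msupp \<phi>"
    and f: "nonneg_CK f" "f v \<noteq> 0"
  shows "\<phi> f \<noteq> 0"
proof
  assume "\<phi> f = 0"
  then have null: "\<phi> (\<lambda>x. complex_of_real (Re (f x))) = 0"
    by (simp only: nonneg_CK_eq_of_real[OF f(1), symmetric])
  define c where "c = Re (f v)"
  have Re_nonneg: "0 \<le> Re (f x)" for x
    using f(1) unfolding nonneg_CK_def by blast
  have "f v = complex_of_real c"
    using f(1) unfolding nonneg_CK_def c_def by blast
  then have "c \<noteq> 0" using f(2) by auto
  then have c: "0 < c" using Re_nonneg[of v] unfolding c_def by linarith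
  have Re_cont: "continuous_on UNIV (\<lambda>x. Re (f x))"
    using CK_continuous_Re[OF nonneg_CK_CK[OF f(1)]] .
  define U where "U = {x. c/2 < Re (f x)}"
  have "null_on \<phi> U"
    unfolding null_on_def
  proof (intro ballI impI)
    fix g :: "'a \<Rightarrow> complex" assume g: "g \<in> CK" "closure {y. g y \<noteq> 0} \<subseteq> U"
    have "c/2 \<le> Re (f x)" if "g x \<noteq> 0" for x
    proof -
      have "x \<in> U" using subsetD[OF g(2) subsetD[OF closure_subset]] that by simp
      then have "c/2 < Re (f x)" by (simp add: U_def)
      then show ?thesis by linarith
    qed
    then show "\<phi> g = 0"
      using c by (intro positive_lin_eq_0_if_null_majorant[OF cpt ph g(1) Re_cont Re_nonneg null, of "c/2"]) auto
  qed
  moreover have "open U" unfolding U_def by (intro open_Collect_less continuous_on_const Re_cont)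
  moreover have "v \<in> U" using c by (simp add: U_def c_def)
  ultimately show False using v notin_msupp_iff by blast
qed

lemma lin_null_majorant:
  fixes \<phi> :: "('a::t2_space \<Rightarrow> complex) \<Rightarrow> complex"
  assumes cpt: "compact (UNIV::'a set)" and ph: "lin_on_CK \<phi>"
    and C: "compact C" "C \<inter> msupp \<phi> = {}"
  obtains h where "continuous_on UNIV h" "\<forall>x. 0 \<le> h x" "\<phi> (\<lambda>x. complex_of_real (h x)) = 0"
    "\<forall>x\<in>C. 0 < h x"
proof -
  have "\<exists>r. continuous_on UNIV r \<and> (\<forall>x. 0 \<le> r x) \<and> r c = 1
      \<and> \<phi> (\<lambda>x. complex_of_real (r x)) = 0" if "c \<in> C" for c
  proof -
    have "c \<notin> msupp \<phi>" using C(2) that by blast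
    from notin_msupp_witness[OF cpt this] show ?thesis by metis
  qed
  then obtain R :: "'a \<Rightarrow> 'a \<Rightarrow> real" where R: "\<And>c. c \<in> C \<Longrightarrow> continuous_on UNIV (R c)"
      "\<And>c x. c \<in> C \<Longrightarrow> 0 \<le> R c x" "\<And>c. c \<in> C \<Longrightarrow> R c c = 1"
      "\<And>c. c \<in> C \<Longrightarrow> \<phi> (\<lambda>x. complex_of_real (R c x)) = 0"
    by metis
  have "C \<subseteq> (\<Union>c\<in>C. {x. 0 < R c x})"
  proof
    fix x assume "x \<in> C"
    then show "x \<in> (\<Union>c\<in>C. {x. 0 < R c x})" using R(3)[of x] by (intro UN_I[of x]) auto
  qed
  moreover have "open {x. 0 < R c x}" if "c \<in> C" for c
    using R(1)[OF that] by (intro open_Collect_less continuous_on_const)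
  ultimately obtain D where D: "D \<subseteq> C" "finite D" "C \<subseteq> (\<Union>c\<in>D. {x. 0 < R c x})"
    using compactE_image[OF C(1), of C "\<lambda>c. {x. 0 < R c x}"] by metis
  define h where "h x = (\<Sum>c\<in>D. R c x)" for x
  have h_cont: "continuous_on UNIV h" unfolding h_def using R(1) D(1) by (intro continuous_on_sum) auto
  have h_nonneg: "0 \<le> h x" for x unfolding h_def using R(2) D(1) by (intro sum_nonneg) auto
  have h_pos: "0 < h x" if x: "x \<in> C" for x
  proof -
    obtain c where c: "c \<in> D" "0 < R c x" using D(3) x by blast
    have "\<And>i. i \<in> D \<Longrightarrow> 0 \<le> R i x" using R(2) D(1) by blast
    then show ?thesis unfolding h_def by (rule sum_pos2[where f="\<lambda>c. R c x", OF D(2) c])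
  qed
  have "\<phi> (\<lambda>x. complex_of_real (h x)) = (\<Sum>c\<in>D. \<phi> (\<lambda>x. complex_of_real (R c x)))"
    unfolding h_def of_real_sum using R(1) D by (intro lin_on_CK_sum[OF ph]) (auto intro: CK_of_real)
  then have h_null: "\<phi> (\<lambda>x. complex_of_real (h x)) = 0" using R(4) D(1) by (simp add: subsetD)
  show ?thesis using h_nonneg h_pos by (intro that[OF h_cont _ h_null]) auto
qed

lemma lin_null_majorant_bounded_below:
  fixes \<phi> :: "('a::t2_space \<Rightarrow> complex) \<Rightarrow> complex"
  assumes cpt: "compact (UNIV::'a set)" and ph: "lin_on_CK \<phi>"
    and C: "compact C" "C \<inter> msupp \<phi> = {}"
  obtains h \<delta> where "continuous_on UNIV h" "\<And>x. 0 \<le> h x" "\<phi> (\<lambda>x. complex_of_real (h x)) = 0"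
    "0 < \<delta>" "\<And>x. x \<in> C \<Longrightarrow> \<delta> \<le> h x"
proof -
  obtain h where h: "continuous_on UNIV h" "\<forall>x. 0 \<le> h x" "\<phi> (\<lambda>x. complex_of_real (h x)) = 0"
      and h_pos: "\<forall>x\<in>C. 0 < h x"
    by (rule lin_null_majorant[OF cpt ph C])
  show ?thesis
  proof (cases "C = {}")
    case True
    then show ?thesis using h by (intro that[of h 1]) auto
  next
    case False
    then obtain x0 where "x0 \<in> C" "\<And>y. y \<in> C \<Longrightarrow> h x0 \<le> h y"
      using continuous_attains_inf[OF C(1) _ continuous_on_subset[OF h(1)]] by blast
    then show ?thesis using h h_pos by (intro that[of h "h x0"]) auto
  qed
qed

lemma positive_lin_eq_0_off_msupp:
  fixes \<phi> :: "('a::t2_space \<Rightarrow> complex) \<Rightarrow> complex"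
  assumes cpt: "compact (UNIV::'a set)" and ph: "positive_lin \<phi>" and f: "f \<in> CK"
    and disj: "closure {x. f x \<noteq> 0} \<inter> msupp \<phi> = {}"
  shows "\<phi> f = 0"
proof -
  have "compact (closure {x. f x \<noteq> 0})" using compact_Int_closed[OF cpt closed_closure] by simp
  then obtain h \<delta> where h: "continuous_on UNIV h" "\<And>x. 0 \<le> h x" "\<phi> (\<lambda>x. complex_of_real (h x)) = 0"
      and \<delta>: "0 < \<delta>" "\<And>x. x \<in> closure {x. f x \<noteq> 0} \<Longrightarrow> \<delta> \<le> h x"
    using lin_null_majorant_bounded_below[OF cpt positive_lin_lin[OF ph] _ disj] by blast
  have "\<delta> \<le> h x" if "f x \<noteq> 0" for x
    using \<delta>(2)[OF subsetD[OF closure_subset]] that by simp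
  then show ?thesis by (rule positive_lin_eq_0_if_null_majorant[OF cpt ph f h \<delta>(1)])
qed

lemma positive_lin_eq_0_if_vanishes_on_msupp:
  fixes \<phi> :: "('a::t2_space \<Rightarrow> complex) \<Rightarrow> complex"
  assumes cpt: "compact (UNIV::'a set)" and ph: "positive_lin \<phi>" and f: "nonneg_CK f"
    and vanish: "\<And>x. x \<in> msupp \<phi> \<Longrightarrow> f x = 0"
  shows "\<phi> f = 0"
proof -
  define r where "r x = Re (f x)" for x
  have f_eq: "f = (\<lambda>x. complex_of_real (r x))" unfolding r_def by (rule nonneg_CK_eq_of_real[OF f])
  have r_cont: "continuous_on UNIV r" unfolding r_def using CK_continuous_Re[OF nonneg_CK_CK[OF f]] .
  have r_vanish: "r x = 0" if "x \<in> msupp \<phi>" for x using vanish[OF that] by (simp add: r_def)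
  define b where "b = Re (\<phi> (\<lambda>_. 1))"
  have b: "0 \<le> b" unfolding b_def using positive_lin_nonneg[OF ph nonneg_CK_of_real[of "\<lambda>_. 1"]] by simp
  \<comment> \<open>\<open>f \<le> max (f - \<epsilon>) 0 + \<epsilon>\<close>, and the first summand vanishes near the support\<close>
  have le: "Re (\<phi> f) \<le> \<epsilon> * b" if \<epsilon>: "0 < \<epsilon>" for \<epsilon>
  proof -
    define s where "s = (\<lambda>x. max (r x - \<epsilon>) 0)"
    have s_cont: "continuous_on UNIV s" unfolding s_def using r_cont by (intro continuous_intros)
    have "closure {x. s x \<noteq> 0} \<subseteq> {x. \<epsilon> \<le> r x}"
      by (rule closure_minimal) (force simp: s_def, intro closed_Collect_le continuous_on_const r_cont)
    moreover have "{x. \<epsilon> \<le> r x} \<inter> msupp \<phi> = {}" using r_vanish \<epsilon> by force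
    ultimately have "\<phi> (\<lambda>x. complex_of_real (s x)) = 0"
      by (intro positive_lin_eq_0_off_msupp[OF cpt ph CK_of_real[OF s_cont]]) auto
    moreover have "Re (\<phi> f) \<le> Re (\<phi> (\<lambda>x. complex_of_real (s x + \<epsilon>)))"
      unfolding f_eq
      by (rule positive_lin_mono[OF ph r_cont continuous_on_add[OF s_cont continuous_on_const]])
        (simp add: s_def)
    moreover have "\<phi> (\<lambda>x. complex_of_real (s x + \<epsilon>)) =
        \<phi> (\<lambda>x. complex_of_real (s x)) + complex_of_real \<epsilon> * \<phi> (\<lambda>_. 1)"
      using lin_on_CK_add[OF positive_lin_lin[OF ph] CK_of_real[OF s_cont], of "\<lambda>x. complex_of_real \<epsilon>"]
        lin_on_CK_const[OF positive_lin_lin[OF ph], of "complex_of_real \<epsilon>"] by simp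
    ultimately show ?thesis by (simp add: b_def)
  qed
  have "Re (\<phi> f) \<le> 0"
  proof (rule field_le_epsilon)
    fix e :: real assume "0 < e"
    then have "Re (\<phi> f) \<le> e / (b + 1) * b" using b by (intro le) simp
    also have "\<dots> \<le> e" using \<open>0 < e\<close> b by (simp add: field_simps)
    finally show "Re (\<phi> f) \<le> 0 + e" by simp
  qed
  then have "Re (\<phi> f) = 0" using positive_lin_nonneg[OF ph f] by linarith
  then show ?thesis using positive_lin_nonneg[OF ph f] by (metis of_real_0)
qed

lemma msupp_nonempty:
  fixes \<phi> :: "('a::t2_space \<Rightarrow> complex) \<Rightarrow> complex"
  assumes "compact (UNIV::'a set)" "positive_lin \<phi>" "\<phi> (\<lambda>_. 1) \<noteq> 0"
  shows "msupp \<phi> \<noteq> {}"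
  using positive_lin_eq_0_off_msupp[OF assms(1,2) CK_const[of 1]] assms(3) by auto

section \<open>Fubini's theorem for bounded functionals\<close>

definition jointly_continuous :: "('a::topological_space \<Rightarrow> 'b::topological_space \<Rightarrow> complex) \<Rightarrow> bool" where
  "jointly_continuous G \<longleftrightarrow> continuous_on UNIV (\<lambda>p. G (fst p) (snd p))"

lemma jointly_continuous_fix_fst: "jointly_continuous G \<Longrightarrow> (\<lambda>y. G x y) \<in> CK"
proof -
  assume G: "jointly_continuous G"
  have "continuous_on UNIV (\<lambda>y. (x, y))" by (intro continuous_intros)
  from continuous_on_compose2[OF G[unfolded jointly_continuous_def] this] show ?thesis
    by (simp add: CK_def)
qed

lemma jointly_continuous_fix_snd: "jointly_continuous G \<Longrightarrow> (\<lambda>x. G x y) \<in> CK"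
proof -
  assume G: "jointly_continuous G"
  have "continuous_on UNIV (\<lambda>x. (x, y))" by (intro continuous_intros)
  from continuous_on_compose2[OF G[unfolded jointly_continuous_def] this] show ?thesis
    by (simp add: CK_def)
qed

lemma jointly_continuous_swap: "jointly_continuous G \<Longrightarrow> jointly_continuous (\<lambda>y x. G x y)"
proof -
  assume G: "jointly_continuous G"
  have "continuous_on UNIV (\<lambda>p. (snd p, fst p))" by (intro continuous_intros)
  from continuous_on_compose2[OF G[unfolded jointly_continuous_def] this] show ?thesis
    by (simp add: jointly_continuous_def)
qed

lemma jointly_continuous_cmult: "jointly_continuous G \<Longrightarrow> jointly_continuous (\<lambda>x y. c * G x y)"
  unfolding jointly_continuous_def by (rule continuous_on_mult_left)

lemma jointly_continuous_of_real:
  "continuous_on UNIV g \<Longrightarrow> jointly_continuous (\<lambda>x y. complex_of_real (g (x, y)))"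
  unfolding jointly_continuous_def by (auto intro: continuous_intros)

lemma jointly_continuous_uniform:
  fixes G :: "'a::topological_space \<Rightarrow> 'b::topological_space \<Rightarrow> complex"
  assumes cpt: "compact (UNIV::'b set)" and G: "jointly_continuous G" and \<epsilon>: "0 < \<epsilon>"
  obtains N where "open N" "x0 \<in> N" "\<forall>x\<in>N. \<forall>y. norm (G x y - G x0 y) < \<epsilon>"
proof -
  define W where "W y = {p. norm (G (fst p) (snd p) - G x0 y) < \<epsilon>/2}" for y
  have W_open: "open (W y)" for y
    unfolding W_def using G[unfolded jointly_continuous_def]
    by (intro open_Collect_less continuous_intros) auto
  have "\<exists>A B. open A \<and> open B \<and> x0 \<in> A \<and> y \<in> B \<and> A \<times> B \<subseteq> W y" for y
  proof -
    have "(x0, y) \<in> W y" using \<epsilon> by (simp add: W_def)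
    from open_prod_elim[OF W_open this] show ?thesis by (metis mem_Sigma_iff)
  qed
  then obtain AA :: "'b \<Rightarrow> 'a set" and BB :: "'b \<Rightarrow> 'b set" where
    AB: "\<And>y. open (AA y) \<and> open (BB y) \<and> x0 \<in> AA y \<and> y \<in> BB y \<and> AA y \<times> BB y \<subseteq> W y"
    by metis
  have "UNIV \<subseteq> (\<Union>y\<in>UNIV. BB y)" using AB by blast
  then obtain Y :: "'b set" where Y: "finite Y" "UNIV \<subseteq> (\<Union>y\<in>Y. BB y)"
    using compactE_image[OF cpt, of UNIV BB] AB by metis
  define N where "N = (\<Inter>y\<in>Y. AA y)"
  have "\<forall>x\<in>N. \<forall>y'. norm (G x y' - G x0 y') < \<epsilon>"
  proof (intro ballI allI)
    fix x y' assume x: "x \<in> N"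
    obtain y where y: "y \<in> Y" "y' \<in> BB y" using Y(2) by blast
    have "x \<in> AA y" using x y(1) unfolding N_def by blast
    then have "(x, y') \<in> W y" "(x0, y') \<in> W y" using AB[of y] y(2) by blast+
    then have "norm (G x y' - G x0 y) < \<epsilon>/2" "norm (G x0 y' - G x0 y) < \<epsilon>/2"
      by (auto simp: W_def)
    then show "norm (G x y' - G x0 y') < \<epsilon>"
      using norm_triangle_ineq4[of "G x y' - G x0 y" "G x0 y' - G x0 y"] by simp
  qed
  moreover have "open N" unfolding N_def using Y(1) AB by (intro open_INT) auto
  moreover have "x0 \<in> N" unfolding N_def using AB by blast
  ultimately show ?thesis by (intro that)
qed

lemma CK_functional_param:
  fixes G :: "'a::t2_space \<Rightarrow> 'b::topological_space \<Rightarrow> complex"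
    and \<phi> :: "('b \<Rightarrow> complex) \<Rightarrow> complex"
  assumes cpt: "compact (UNIV::'b set)" and ph: "cmeasure \<phi>" and G: "jointly_continuous G"
  shows "(\<lambda>x. \<phi> (G x)) \<in> CK"
proof -
  obtain B where B: "B \<ge> 0" "\<And>f. f \<in> CK \<Longrightarrow> norm (\<phi> f) \<le> B * supnorm f"
    using cmeasure_bound[OF cpt ph] by blast
  have "isCont (\<lambda>x. \<phi> (G x)) x0" for x0
    unfolding isCont_def tendsto_iff
  proof (intro allI impI)
    fix \<epsilon> :: real assume \<epsilon>: "\<epsilon> > 0"
    define \<delta> where "\<delta> = \<epsilon> / (2 * (B + 1))"
    have \<delta>: "\<delta> > 0" unfolding \<delta>_def using \<epsilon> B(1) by simp
    obtain N where N: "open N" "x0 \<in> N" "\<forall>x\<in>N. \<forall>y. norm (G x y - G x0 y) < \<delta>"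
      using jointly_continuous_uniform[OF cpt G \<delta>] by blast
    have "dist (\<phi> (G x)) (\<phi> (G x0)) < \<epsilon>" if x: "x \<in> N" for x
    proof -
      have CK: "G x \<in> CK" "G x0 \<in> CK" using jointly_continuous_fix_fst[OF G] by auto
      have "\<phi> (G x) - \<phi> (G x0) = \<phi> (\<lambda>y. G x y - G x0 y)"
        using lin_on_CK_diff[OF cmeasure_lin[OF ph] CK] by simp
      moreover have "norm (\<phi> (\<lambda>y. G x y - G x0 y)) \<le> B * supnorm (\<lambda>y. G x y - G x0 y)"
        using B(2) CK_diff[OF CK] by blast
      moreover have "supnorm (\<lambda>y. G x y - G x0 y) \<le> \<delta>"
        using N(3) x by (intro supnorm_le) (simp add: less_imp_le)
      ultimately have "norm (\<phi> (G x) - \<phi> (G x0)) \<le> B * \<delta>"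
        using B(1) by (metis mult_left_mono order_trans)
      also have "B * \<delta> < \<epsilon>" unfolding \<delta>_def using \<epsilon> B(1)
        by (simp add: field_simps) (smt (verit) mult_nonneg_nonneg)
      finally show ?thesis by (simp add: dist_norm)
    qed
    then show "eventually (\<lambda>x. dist (\<phi> (G x)) (\<phi> (G x0)) < \<epsilon>) (at x0)"
      unfolding eventually_at_topological using N(1,2) by blast
  qed
  then show ?thesis by (simp add: CK_def continuous_at_imp_continuous_on)
qed

lemma norm_iterated_le:
  fixes \<phi> :: "('a::t2_space \<Rightarrow> complex) \<Rightarrow> complex"
    and \<psi> :: "('b::topological_space \<Rightarrow> complex) \<Rightarrow> complex"
  assumes cpt: "compact (UNIV::'b set)" and \<psi>: "cmeasure \<psi>" and G: "jointly_continuous G"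
    and B\<phi>: "B\<phi> \<ge> 0" "\<And>f. f \<in> CK \<Longrightarrow> norm (\<phi> f) \<le> B\<phi> * supnorm f"
    and B\<psi>: "B\<psi> \<ge> 0" "\<And>f. f \<in> CK \<Longrightarrow> norm (\<psi> f) \<le> B\<psi> * supnorm f"
    and bound: "\<And>x y. norm (G x y) \<le> \<epsilon>"
  shows "norm (\<phi> (\<lambda>x. \<psi> (G x))) \<le> B\<phi> * (B\<psi> * \<epsilon>)"
proof -
  have "norm (\<psi> (G x)) \<le> B\<psi> * \<epsilon>" for x
  proof -
    have "norm (\<psi> (G x)) \<le> B\<psi> * supnorm (G x)"
      using B\<psi>(2) jointly_continuous_fix_fst[OF G] by blast
    also have "\<dots> \<le> B\<psi> * \<epsilon>" using B\<psi>(1) bound by (intro mult_left_mono supnorm_le) auto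
    finally show ?thesis .
  qed
  then have "supnorm (\<lambda>x. \<psi> (G x)) \<le> B\<psi> * \<epsilon>" by (rule supnorm_le)
  then show ?thesis
    using B\<phi> CK_functional_param[OF cpt \<psi> G] by (meson mult_left_mono order_trans)
qed

inductive_set tensor_sums :: "('a::topological_space \<times> 'b::topological_space \<Rightarrow> real) set" where
  tensor_sums_tensor:
    "continuous_on UNIV a \<Longrightarrow> continuous_on UNIV b \<Longrightarrow> (\<lambda>p. a (fst p) * b (snd p)) \<in> tensor_sums"
| tensor_sums_add: "f \<in> tensor_sums \<Longrightarrow> g \<in> tensor_sums \<Longrightarrow> (\<lambda>p. f p + g p) \<in> tensor_sums"

lemma continuous_tensor_sums: "f \<in> tensor_sums \<Longrightarrow> continuous_on UNIV f"
proof (induction rule: tensor_sums.induct)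
  case (tensor_sums_tensor a b)
  have "continuous_on UNIV (\<lambda>p. a (fst p))"
    by (rule continuous_on_compose2[of UNIV a]) (auto intro: continuous_intros tensor_sums_tensor)
  moreover have "continuous_on UNIV (\<lambda>p. b (snd p))"
    by (rule continuous_on_compose2[of UNIV b]) (auto intro: continuous_intros tensor_sums_tensor)
  ultimately show ?case by (rule continuous_on_mult)
next
  case (tensor_sums_add f g)
  then show ?case by (intro continuous_on_add)
qed

lemma tensor_sums_mult:
  assumes "f \<in> tensor_sums" "g \<in> tensor_sums" shows "(\<lambda>p. f p * g p) \<in> tensor_sums"
  using assms
proof (induction f rule: tensor_sums.induct)
  case (tensor_sums_tensor a b)
  from tensor_sums_tensor.prems show ?case
  proof (induction g rule: tensor_sums.induct)
    case (tensor_sums_tensor c d)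
    have eq: "(\<lambda>p. a (fst p) * b (snd p) * (c (fst p) * d (snd p))) =
        (\<lambda>p. (\<lambda>x. a x * c x) (fst p) * (\<lambda>y. b y * d y) (snd p))"
      by (auto simp: algebra_simps)
    have "continuous_on UNIV (\<lambda>x. a x * c x)" "continuous_on UNIV (\<lambda>y. b y * d y)"
      using tensor_sums_tensor \<open>continuous_on UNIV a\<close> \<open>continuous_on UNIV b\<close>
      by (auto intro: continuous_on_mult)
    then show ?case unfolding eq by (rule tensor_sums.tensor_sums_tensor)
  next
    case (tensor_sums_add g1 g2)
    have eq: "(\<lambda>p. a (fst p) * b (snd p) * (g1 p + g2 p)) =
        (\<lambda>p. (\<lambda>p. a (fst p) * b (snd p) * g1 p) p + (\<lambda>p. a (fst p) * b (snd p) * g2 p) p)"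
      by (auto simp: algebra_simps)
    show ?case unfolding eq using tensor_sums_add.IH by (rule tensor_sums.tensor_sums_add)
  qed
next
  case (tensor_sums_add f1 f2)
  have eq: "(\<lambda>p. (f1 p + f2 p) * g p) = (\<lambda>p. (\<lambda>p. f1 p * g p) p + (\<lambda>p. f2 p * g p) p)"
    by (auto simp: algebra_simps)
  show ?case unfolding eq using tensor_sums_add by (intro tensor_sums.tensor_sums_add) auto
qed

lemma tensor_sums_const: "(\<lambda>_. c) \<in> tensor_sums"
  using tensor_sums_tensor[of "\<lambda>_. c" "\<lambda>_. 1"] by simp

lemma tensor_sums_separating:
  fixes p q :: "'a::t2_space \<times> 'b::t2_space"
  assumes cpt_a: "compact (UNIV::'a set)" and cpt_b: "compact (UNIV::'b set)" and "p \<noteq> q"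
  shows "\<exists>f\<in>tensor_sums. f p \<noteq> f q"
proof (cases "fst p = fst q")
  case False
  then obtain h :: "'a \<Rightarrow> real" where h: "continuous_on UNIV h" "h (fst p) \<noteq> h (fst q)"
    using continuous_separating_compact_t2[OF cpt_a] by blast
  have "(\<lambda>r. h (fst r) * (\<lambda>_. 1) (snd r)) \<in> tensor_sums" using h(1) by (intro tensor_sums_tensor) auto
  then show ?thesis by (rule bexI[rotated]) (use h(2) in simp)
next
  case True
  then have "snd p \<noteq> snd q" using assms(3) by (metis prod.expand)
  then obtain h :: "'b \<Rightarrow> real" where h: "continuous_on UNIV h" "h (snd p) \<noteq> h (snd q)"
    using continuous_separating_compact_t2[OF cpt_b] by blast
  have "(\<lambda>r. (\<lambda>_. 1) (fst r) * h (snd r)) \<in> tensor_sums" using h(1) by (intro tensor_sums_tensor) auto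
  then show ?thesis by (rule bexI[rotated]) (use h(2) in simp)
qed

lemma tensor_sums_dense:
  fixes g :: "'a::t2_space \<times> 'b::t2_space \<Rightarrow> real"
  assumes cpt_a: "compact (UNIV::'a set)" and cpt_b: "compact (UNIV::'b set)"
    and g: "continuous_on UNIV g" and \<epsilon>: "0 < \<epsilon>"
  obtains h where "h \<in> tensor_sums" "\<forall>p. \<bar>g p - h p\<bar> < \<epsilon>"
proof -
  interpret function_ring_on "tensor_sums :: ('a \<times> 'b \<Rightarrow> real) set" UNIV
  proof
    show "compact (UNIV :: ('a \<times> 'b) set)" using compact_Times[OF cpt_a cpt_b] by simp
  next
    fix f :: "'a \<times> 'b \<Rightarrow> real" assume "f \<in> tensor_sums"
    then show "continuous_on UNIV f" by (rule continuous_tensor_sums)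
  next
    fix f g :: "'a \<times> 'b \<Rightarrow> real" assume "f \<in> tensor_sums" "g \<in> tensor_sums"
    then show "(\<lambda>x. f x + g x) \<in> tensor_sums" by (rule tensor_sums_add)
  next
    fix f g :: "'a \<times> 'b \<Rightarrow> real" assume "f \<in> tensor_sums" "g \<in> tensor_sums"
    then show "(\<lambda>x. f x * g x) \<in> tensor_sums" by (rule tensor_sums_mult)
  next
    fix c :: real show "(\<lambda>_. c) \<in> (tensor_sums :: ('a \<times> 'b \<Rightarrow> real) set)" by (rule tensor_sums_const)
  next
    fix x y :: "'a \<times> 'b" assume "x \<noteq> y"
    then show "\<exists>f\<in>tensor_sums. f x \<noteq> f y" by (rule tensor_sums_separating[OF cpt_a cpt_b])
  qed
  show ?thesis using Stone_Weierstrass_basic[OF g \<epsilon>] that by auto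
qed

definition fubini_defect ::
  "(('a \<Rightarrow> complex) \<Rightarrow> complex) \<Rightarrow> (('b \<Rightarrow> complex) \<Rightarrow> complex) \<Rightarrow> ('a \<Rightarrow> 'b \<Rightarrow> complex) \<Rightarrow> complex"
  where "fubini_defect \<phi> \<psi> G = \<phi> (\<lambda>x. \<psi> (G x)) - \<psi> (\<lambda>y. \<phi> (\<lambda>x. G x y))"

context
  fixes \<phi> :: "('a::t2_space \<Rightarrow> complex) \<Rightarrow> complex" and \<psi> :: "('b::t2_space \<Rightarrow> complex) \<Rightarrow> complex"
  assumes cpt_a: "compact (UNIV::'a set)" and cpt_b: "compact (UNIV::'b set)"
    and \<phi>: "cmeasure \<phi>" and \<psi>: "cmeasure \<psi>"
begin

lemma fubini_defect_add:
  assumes G: "jointly_continuous G" and H: "jointly_continuous H"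
  shows "fubini_defect \<phi> \<psi> (\<lambda>x y. G x y + H x y) = fubini_defect \<phi> \<psi> G + fubini_defect \<phi> \<psi> H"
proof -
  have "\<psi> (\<lambda>y. G x y + H x y) = \<psi> (G x) + \<psi> (H x)" for x
    using lin_on_CK_add[OF cmeasure_lin[OF \<psi>] jointly_continuous_fix_fst[OF G]
        jointly_continuous_fix_fst[OF H]] .
  moreover have "\<phi> (\<lambda>x. G x y + H x y) = \<phi> (\<lambda>x. G x y) + \<phi> (\<lambda>x. H x y)" for y
    using lin_on_CK_add[OF cmeasure_lin[OF \<phi>] jointly_continuous_fix_snd[OF G]
        jointly_continuous_fix_snd[OF H]] .
  moreover have "\<phi> (\<lambda>x. \<psi> (G x) + \<psi> (H x)) = \<phi> (\<lambda>x. \<psi> (G x)) + \<phi> (\<lambda>x. \<psi> (H x))"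
    using lin_on_CK_add[OF cmeasure_lin[OF \<phi>] CK_functional_param[OF cpt_b \<psi> G]
        CK_functional_param[OF cpt_b \<psi> H]] .
  moreover have "\<psi> (\<lambda>y. \<phi> (\<lambda>x. G x y) + \<phi> (\<lambda>x. H x y)) =
      \<psi> (\<lambda>y. \<phi> (\<lambda>x. G x y)) + \<psi> (\<lambda>y. \<phi> (\<lambda>x. H x y))"
    using lin_on_CK_add[OF cmeasure_lin[OF \<psi>] CK_functional_param[OF cpt_a \<phi> jointly_continuous_swap[OF G]]
        CK_functional_param[OF cpt_a \<phi> jointly_continuous_swap[OF H]]] .
  ultimately show ?thesis by (simp add: fubini_defect_def)
qed

lemma fubini_defect_cmult:
  assumes G: "jointly_continuous G"
  shows "fubini_defect \<phi> \<psi> (\<lambda>x y. c * G x y) = c * fubini_defect \<phi> \<psi> G"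
proof -
  have "\<psi> (\<lambda>y. c * G x y) = c * \<psi> (G x)" for x
    using lin_on_CK_cmult[OF cmeasure_lin[OF \<psi>] jointly_continuous_fix_fst[OF G]] .
  moreover have "\<phi> (\<lambda>x. c * G x y) = c * \<phi> (\<lambda>x. G x y)" for y
    using lin_on_CK_cmult[OF cmeasure_lin[OF \<phi>] jointly_continuous_fix_snd[OF G]] .
  moreover have "\<phi> (\<lambda>x. c * \<psi> (G x)) = c * \<phi> (\<lambda>x. \<psi> (G x))"
    using lin_on_CK_cmult[OF cmeasure_lin[OF \<phi>] CK_functional_param[OF cpt_b \<psi> G]] .
  moreover have "\<psi> (\<lambda>y. c * \<phi> (\<lambda>x. G x y)) = c * \<psi> (\<lambda>y. \<phi> (\<lambda>x. G x y))"
    using lin_on_CK_cmult[OF cmeasure_lin[OF \<psi>] CK_functional_param[OF cpt_a \<phi> jointly_continuous_swap[OF G]]] .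
  ultimately show ?thesis by (simp add: fubini_defect_def right_diff_distrib)
qed

lemma norm_fubini_defect_le:
  obtains B where "B \<ge> 0" "\<And>G \<epsilon>. jointly_continuous G \<Longrightarrow> (\<And>x y. norm (G x y) \<le> \<epsilon>) \<Longrightarrow>
    norm (fubini_defect \<phi> \<psi> G) \<le> B * \<epsilon>"
proof -
  obtain B\<phi> where B\<phi>: "B\<phi> \<ge> 0" "\<And>f. f \<in> CK \<Longrightarrow> norm (\<phi> f) \<le> B\<phi> * supnorm f"
    using cmeasure_bound[OF cpt_a \<phi>] by blast
  obtain B\<psi> where B\<psi>: "B\<psi> \<ge> 0" "\<And>f. f \<in> CK \<Longrightarrow> norm (\<psi> f) \<le> B\<psi> * supnorm f"
    using cmeasure_bound[OF cpt_b \<psi>] by blast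
  show ?thesis
  proof (rule that[of "2 * B\<phi> * B\<psi>"])
    fix G :: "'a \<Rightarrow> 'b \<Rightarrow> complex" and \<epsilon> :: real
    assume G: "jointly_continuous G" and bound: "\<And>x y. norm (G x y) \<le> \<epsilon>"
    have "norm (\<phi> (\<lambda>x. \<psi> (G x))) \<le> B\<phi> * (B\<psi> * \<epsilon>)"
      by (rule norm_iterated_le[OF cpt_b \<psi> G B\<phi> B\<psi> bound])
    moreover have "norm (\<psi> (\<lambda>y. \<phi> (\<lambda>x. G x y))) \<le> B\<psi> * (B\<phi> * \<epsilon>)"
      by (rule norm_iterated_le[OF cpt_a \<phi> jointly_continuous_swap[OF G] B\<psi> B\<phi> bound])
    ultimately have "norm (fubini_defect \<phi> \<psi> G) \<le> B\<phi> * (B\<psi> * \<epsilon>) + B\<psi> * (B\<phi> * \<epsilon>)"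
      unfolding fubini_defect_def by (meson add_mono norm_triangle_ineq4 order_trans)
    then show "norm (fubini_defect \<phi> \<psi> G) \<le> 2 * B\<phi> * B\<psi> * \<epsilon>"
      by (simp only: mult.assoc mult.left_commute[of B\<psi>])
  qed (use B\<phi> B\<psi> in simp)
qed

lemma fubini_defect_tensor_sums:
  "g \<in> tensor_sums \<Longrightarrow> fubini_defect \<phi> \<psi> (\<lambda>x y. complex_of_real (g (x, y))) = 0"
proof (induction g rule: tensor_sums.induct)
  case (tensor_sums_tensor a b)
  let ?a = "\<lambda>x. complex_of_real (a x)" and ?b = "\<lambda>y. complex_of_real (b y)"
  have CK: "?a \<in> CK" "?b \<in> CK" using tensor_sums_tensor by (auto intro: CK_of_real)
  have inner_\<psi>: "\<psi> (\<lambda>y. complex_of_real (a x * b y)) = complex_of_real (a x) * \<psi> ?b" for x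
    using lin_on_CK_cmult[OF cmeasure_lin[OF \<psi>] CK(2), of "complex_of_real (a x)"] by simp
  have inner_\<phi>: "\<phi> (\<lambda>x. complex_of_real (a x * b y)) = complex_of_real (b y) * \<phi> ?a" for y
    using lin_on_CK_cmult[OF cmeasure_lin[OF \<phi>] CK(1), of "complex_of_real (b y)"] by (simp add: mult.commute)
  have "\<phi> (\<lambda>x. \<psi> (\<lambda>y. complex_of_real (a x * b y))) = \<phi> (\<lambda>x. \<psi> ?b * ?a x)"
    using inner_\<psi> by (simp add: mult.commute)
  also have "\<dots> = \<psi> ?b * \<phi> ?a"
    by (rule lin_on_CK_cmult[OF cmeasure_lin[OF \<phi>] CK(1)])
  also have "\<dots> = \<psi> (\<lambda>y. \<phi> ?a * ?b y)"
    using lin_on_CK_cmult[OF cmeasure_lin[OF \<psi>] CK(2), of "\<phi> ?a"] by simp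
  also have "\<dots> = \<psi> (\<lambda>y. \<phi> (\<lambda>x. complex_of_real (a x * b y)))"
    using inner_\<phi> by (simp add: mult.commute)
  finally show ?case by (simp add: fubini_defect_def)
next
  case (tensor_sums_add f g)
  then have "jointly_continuous (\<lambda>x y. complex_of_real (f (x, y)))"
      "jointly_continuous (\<lambda>x y. complex_of_real (g (x, y)))"
    by (auto intro: jointly_continuous_of_real continuous_tensor_sums)
  from fubini_defect_add[OF this] tensor_sums_add.IH show ?case by simp
qed

lemma fubini_defect_of_real:
  assumes g: "continuous_on UNIV g"
  shows "fubini_defect \<phi> \<psi> (\<lambda>x y. complex_of_real (g (x, y))) = 0"
proof -
  obtain B where B: "B \<ge> 0" "\<And>G \<epsilon>. jointly_continuous G \<Longrightarrow> (\<And>x y. norm (G x y) \<le> \<epsilon>) \<Longrightarrow>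
      norm (fubini_defect \<phi> \<psi> G) \<le> B * \<epsilon>"
    using norm_fubini_defect_le by blast
  \<comment> \<open>the defect vanishes on the dense subspace of tensor sums and is bounded\<close>
  have approx: "norm (fubini_defect \<phi> \<psi> (\<lambda>x y. complex_of_real (g (x, y)))) \<le> B * \<epsilon>"
    if \<epsilon>: "0 < \<epsilon>" for \<epsilon>
  proof -
    obtain p where p: "p \<in> tensor_sums" "\<forall>q. \<bar>g q - p q\<bar> < \<epsilon>"
      using tensor_sums_dense[OF cpt_a cpt_b g \<epsilon>] by blast
    define d where "d q = g q - p q" for q
    have p_cont: "continuous_on UNIV p" by (rule continuous_tensor_sums[OF p(1)])
    have d_cont: "continuous_on UNIV d" unfolding d_def using g p_cont by (rule continuous_on_diff)
    have "fubini_defect \<phi> \<psi> (\<lambda>x y. complex_of_real (g (x, y))) =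
        fubini_defect \<phi> \<psi> (\<lambda>x y. complex_of_real (d (x, y)) + complex_of_real (p (x, y)))"
      by (simp add: d_def)
    also have "\<dots> = fubini_defect \<phi> \<psi> (\<lambda>x y. complex_of_real (d (x, y)))"
      using fubini_defect_add[OF jointly_continuous_of_real[OF d_cont] jointly_continuous_of_real[OF p_cont]]
        fubini_defect_tensor_sums[OF p(1)] by simp
    also have "norm \<dots> \<le> B * \<epsilon>"
    proof (rule B(2)[OF jointly_continuous_of_real[OF d_cont]])
      show "norm (complex_of_real (d (x, y))) \<le> \<epsilon>" for x y
        using p(2) by (simp add: d_def less_imp_le del: of_real_diff)
    qed
    finally show ?thesis .
  qed
  have "norm (fubini_defect \<phi> \<psi> (\<lambda>x y. complex_of_real (g (x, y)))) \<le> 0"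
  proof (rule field_le_epsilon)
    fix e :: real assume "0 < e"
    then have "norm (fubini_defect \<phi> \<psi> (\<lambda>x y. complex_of_real (g (x, y)))) \<le> B * (e / (B + 1))"
      using B(1) by (intro approx) simp
    also have "\<dots> \<le> e" using \<open>0 < e\<close> B(1) by (simp add: field_simps)
    finally show "norm (fubini_defect \<phi> \<psi> (\<lambda>x y. complex_of_real (g (x, y)))) \<le> 0 + e" by simp
  qed
  then show ?thesis by simp
qed

theorem fubini:
  assumes G: "jointly_continuous G"
  shows "\<phi> (\<lambda>x. \<psi> (G x)) = \<psi> (\<lambda>y. \<phi> (\<lambda>x. G x y))"
proof -
  define g1 where "g1 p = Re (G (fst p) (snd p))" for p
  define g2 where "g2 p = Im (G (fst p) (snd p))" for p
  have cont: "continuous_on UNIV g1" "continuous_on UNIV g2"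
    unfolding g1_def g2_def using G[unfolded jointly_continuous_def]
    by (auto intro: continuous_on_Re continuous_on_Im)
  have "G = (\<lambda>x y. complex_of_real (g1 (x, y)) + \<i> * complex_of_real (g2 (x, y)))"
    by (intro ext) (simp add: g1_def g2_def complex_eq_iff)
  then have "fubini_defect \<phi> \<psi> G = fubini_defect \<phi> \<psi> (\<lambda>x y. complex_of_real (g1 (x, y)))
      + fubini_defect \<phi> \<psi> (\<lambda>x y. \<i> * complex_of_real (g2 (x, y)))"
    using fubini_defect_add[OF jointly_continuous_of_real[OF cont(1)]
        jointly_continuous_cmult[OF jointly_continuous_of_real[OF cont(2)]]]
    by (simp only:)
  also have "\<dots> = 0"
    using fubini_defect_cmult[OF jointly_continuous_of_real[OF cont(2)]]
      fubini_defect_of_real[OF cont(1)] fubini_defect_of_real[OF cont(2)]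
    by (simp only: mult_zero_right add_0)
  finally have "fubini_defect \<phi> \<psi> G = 0" .
  then show ?thesis by (simp add: fubini_defect_def)
qed

end

section \<open>Supports of mixtures\<close>

lemma msupp_mixture_supset:
  fixes \<phi> :: "('a::t2_space \<Rightarrow> complex) \<Rightarrow> complex" and \<Phi> :: "'a \<Rightarrow> ('a \<Rightarrow> complex) \<Rightarrow> complex"
  assumes cpt: "compact (UNIV::'a set)" and ph: "positive_lin \<phi>" and \<Phi>: "\<And>t. positive_lin (\<Phi> t)"
    and \<Phi>_CK: "\<And>f. f \<in> CK \<Longrightarrow> (\<lambda>t. \<Phi> t f) \<in> CK"
  shows "(\<Union>t\<in>msupp \<phi>. msupp (\<Phi> t)) \<subseteq> msupp (\<lambda>f. \<phi> (\<lambda>t. \<Phi> t f))"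
proof
  fix v assume "v \<in> (\<Union>t\<in>msupp \<phi>. msupp (\<Phi> t))"
  then obtain w where w: "w \<in> msupp \<phi>" "v \<in> msupp (\<Phi> w)" by blast
  show "v \<in> msupp (\<lambda>f. \<phi> (\<lambda>t. \<Phi> t f))"
  proof (rule ccontr)
    assume "v \<notin> msupp (\<lambda>f. \<phi> (\<lambda>t. \<Phi> t f))"
    then obtain r :: "'a \<Rightarrow> real" where r: "continuous_on UNIV r" "\<forall>x. 0 \<le> r x" "r v = 1"
        "\<phi> (\<lambda>t. \<Phi> t (\<lambda>x. complex_of_real (r x))) = 0"
      by (rule notin_msupp_witness[OF cpt])
    have nonneg: "nonneg_CK (\<lambda>x. complex_of_real (r x))" using r(1,2) by (intro nonneg_CK_of_real) auto
    have "nonneg_CK (\<lambda>t. \<Phi> t (\<lambda>x. complex_of_real (r x)))"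
      unfolding nonneg_CK_def using \<Phi>_CK[OF nonneg_CK_CK[OF nonneg]] positive_lin_nonneg[OF \<Phi> nonneg] by blast
    moreover have "\<Phi> w (\<lambda>x. complex_of_real (r x)) \<noteq> 0"
      by (rule positive_lin_neq_0_on_msupp[OF cpt \<Phi> w(2) nonneg]) (simp add: r(3))
    ultimately have "\<phi> (\<lambda>t. \<Phi> t (\<lambda>x. complex_of_real (r x))) \<noteq> 0"
      by (intro positive_lin_neq_0_on_msupp[OF cpt ph w(1)])
    then show False using r(4) by simp
  qed
qed

lemma separate_point_from_msupp_family:
  fixes \<Phi> :: "'a::t2_space \<Rightarrow> ('a \<Rightarrow> complex) \<Rightarrow> complex"
  assumes cpt: "compact (UNIV::'a set)" and S: "closed S"
    and \<Phi>_usc: "\<forall>U. open U \<longrightarrow> open {t. msupp (\<Phi> t) \<subseteq> U}"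
    and v: "v \<notin> (\<Union>t\<in>S. msupp (\<Phi> t))"
  shows "\<exists>V N. open V \<and> v \<in> V \<and> open N \<and> S \<subseteq> N \<and> (\<forall>t\<in>N. V \<inter> msupp (\<Phi> t) = {})"
proof -
  have "\<forall>t\<in>S. \<exists>A W. open A \<and> open W \<and> v \<in> A \<and> msupp (\<Phi> t) \<subseteq> W \<and> A \<inter> W = {}"
  proof
    fix t assume "t \<in> S"
    then have "v \<notin> msupp (\<Phi> t)" using v by blast
    then obtain A W where "open A" "open W" "v \<in> A" "msupp (\<Phi> t) \<subseteq> W" "A \<inter> W = {}"
      by (rule separate_point_closed[OF cpt closed_msupp])
    then show "\<exists>A W. open A \<and> open W \<and> v \<in> A \<and> msupp (\<Phi> t) \<subseteq> W \<and> A \<inter> W = {}" by blast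
  qed
  then obtain AA WW :: "'a \<Rightarrow> 'a set" where AW: "\<And>t. t \<in> S \<Longrightarrow>
      open (AA t) \<and> open (WW t) \<and> v \<in> AA t \<and> msupp (\<Phi> t) \<subseteq> WW t \<and> AA t \<inter> WW t = {}"
    by metis
  define NN where "NN t = {t'. msupp (\<Phi> t') \<subseteq> WW t}" for t
  have NN_open: "open (NN t)" if "t \<in> S" for t unfolding NN_def using AW[OF that] \<Phi>_usc by blast
  have cover: "S \<subseteq> (\<Union>t\<in>S. NN t)" using AW unfolding NN_def by blast
  have "compact S" using compact_Int_closed[OF cpt S] by simp
  then obtain T where T: "T \<subseteq> S" "finite T" "S \<subseteq> (\<Union>t\<in>T. NN t)"
    using compactE_image[of S S NN] NN_open cover by metis
  define V where "V = (\<Inter>t\<in>T. AA t)"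
  define N where "N = (\<Union>t\<in>T. NN t)"
  have "open V" unfolding V_def using T AW by (intro open_INT) auto
  moreover have "v \<in> V" unfolding V_def using T(1) AW by blast
  moreover have "open N" unfolding N_def using T(1) NN_open by blast
  moreover have "S \<subseteq> N" unfolding N_def by (rule T(3))
  moreover have "\<forall>t'\<in>N. V \<inter> msupp (\<Phi> t') = {}"
  proof
    fix t' assume "t' \<in> N"
    then obtain t where t: "t \<in> T" "msupp (\<Phi> t') \<subseteq> WW t" by (auto simp: N_def NN_def)
    then show "V \<inter> msupp (\<Phi> t') = {}" using AW[of t] T(1) unfolding V_def by blast
  qed
  ultimately show ?thesis by blast
qed

lemma msupp_mixture_subset:
  fixes \<phi> :: "('a::t2_space \<Rightarrow> complex) \<Rightarrow> complex" and \<Phi> :: "'a \<Rightarrow> ('a \<Rightarrow> complex) \<Rightarrow> complex"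
  assumes cpt: "compact (UNIV::'a set)" and ph: "positive_lin \<phi>" and \<Phi>: "\<And>t. positive_lin (\<Phi> t)"
    and \<Phi>_CK: "\<And>f. f \<in> CK \<Longrightarrow> (\<lambda>t. \<Phi> t f) \<in> CK"
    and \<Phi>_usc: "\<And>U. open U \<Longrightarrow> open {t. msupp (\<Phi> t) \<subseteq> U}"
  shows "msupp (\<lambda>f. \<phi> (\<lambda>t. \<Phi> t f)) \<subseteq> (\<Union>t\<in>msupp \<phi>. msupp (\<Phi> t))"
proof
  fix v assume v: "v \<in> msupp (\<lambda>f. \<phi> (\<lambda>t. \<Phi> t f))"
  show "v \<in> (\<Union>t\<in>msupp \<phi>. msupp (\<Phi> t))"
  proof (rule ccontr)
    assume v_notin: "v \<notin> (\<Union>t\<in>msupp \<phi>. msupp (\<Phi> t))"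
    have "\<forall>U. open U \<longrightarrow> open {t. msupp (\<Phi> t) \<subseteq> U}" using \<Phi>_usc by blast
    from separate_point_from_msupp_family[OF cpt closed_msupp this v_notin]
    obtain V N where VN: "open V" "v \<in> V" "open N" "msupp \<phi> \<subseteq> N"
        "\<forall>t\<in>N. V \<inter> msupp (\<Phi> t) = {}"
      by blast
    have "null_on (\<lambda>f. \<phi> (\<lambda>t. \<Phi> t f)) V"
      unfolding null_on_def
    proof (intro ballI impI)
      fix f :: "'a \<Rightarrow> complex" assume f: "f \<in> CK" "closure {y. f y \<noteq> 0} \<subseteq> V"
      have "\<Phi> t f = 0" if t: "t \<in> N" for t
      proof (rule positive_lin_eq_0_off_msupp[OF cpt \<Phi> f(1)])
        show "closure {y. f y \<noteq> 0} \<inter> msupp (\<Phi> t) = {}" using VN(5) t f(2) by blast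
      qed
      then have "closure {t. \<Phi> t f \<noteq> 0} \<subseteq> - N"
        using VN(3) by (intro closure_minimal) auto
      then have "closure {t. \<Phi> t f \<noteq> 0} \<inter> msupp \<phi> = {}" using VN(4) by blast
      then show "\<phi> (\<lambda>t. \<Phi> t f) = 0" by (rule positive_lin_eq_0_off_msupp[OF cpt ph \<Phi>_CK[OF f(1)]])
    qed
    then show False using VN(1,2) v notin_msupp_iff by blast
  qed
qed

section \<open>Compact hypergroups\<close>

lemma set_pow_subset:
  assumes "A \<subseteq> P" and "\<And>x y. x \<in> P \<Longrightarrow> y \<in> P \<Longrightarrow> msupp (conv x y) \<subseteq> P"
  shows "set_pow conv A n \<subseteq> P"
proof (induction n)
  case 0
  then show ?case using assms(1) by simp
next
  case (Suc n)
  note IH = Suc.IH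
  show ?case
  proof (cases n)
    case 0
    then show ?thesis using assms(1) by simp
  next
    case (Suc m)
    then have "set_pow conv A (Suc n) = set_conv conv (set_pow conv A n) A" by simp
    then show ?thesis using IH assms unfolding set_conv_def by blast
  qed
qed

lemma adapted_closed_subset_eq_UNIV:
  assumes "adapted conv invo \<sigma>" "closed P" "msupp \<sigma> \<union> invo ` msupp \<sigma> \<subseteq> P"
    and "\<And>x y. x \<in> P \<Longrightarrow> y \<in> P \<Longrightarrow> msupp (conv x y) \<subseteq> P"
  shows "P = UNIV"
proof -
  have "(\<Union>n\<in>{1..}. set_pow conv (msupp \<sigma> \<union> invo ` msupp \<sigma>) n) \<subseteq> P"
    using set_pow_subset[where conv = conv, OF assms(3,4)] by blast
  then have "closure (\<Union>n\<in>{1..}. set_pow conv (msupp \<sigma> \<union> invo ` msupp \<sigma>) n) \<subseteq> P"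
    by (rule closure_minimal[OF _ assms(2)])
  then show ?thesis using assms(1) unfolding adapted_def by blast
qed

locale hypergroup =
  fixes conv :: "'a::t2_space \<Rightarrow> 'a \<Rightarrow> ('a \<Rightarrow> complex) \<Rightarrow> complex"
    and e :: 'a and invo :: "'a \<Rightarrow> 'a"
  assumes compact_hypergroup: "compact_hypergroup conv e invo"
begin

lemma compact_UNIV: "compact (UNIV::'a set)"
  using compact_hypergroup by (simp add: compact_hypergroup_def)

lemma prob_conv: "prob_fun (conv x y)"
  using compact_hypergroup by (simp add: compact_hypergroup_def)

lemma conv_assoc: "f \<in> CK \<Longrightarrow> conv x y (\<lambda>u. conv u z f) = conv y z (\<lambda>v. conv x v f)"
  using compact_hypergroup by (simp add: compact_hypergroup_def)

lemma jointly_continuous_conv: "f \<in> CK \<Longrightarrow> jointly_continuous (\<lambda>x y. conv x y f)"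
  using compact_hypergroup by (simp add: compact_hypergroup_def jointly_continuous_def)

lemma open_msupp_conv_subset: "open U \<Longrightarrow> open {p. msupp (conv (fst p) (snd p)) \<subseteq> U}"
  using compact_hypergroup by (simp add: compact_hypergroup_def)

lemma conv_unit_left: "f \<in> CK \<Longrightarrow> conv e x f = f x"
  using compact_hypergroup by (simp add: compact_hypergroup_def)

lemma continuous_invo: "continuous_on UNIV invo"
  using compact_hypergroup by (simp add: compact_hypergroup_def)

lemma invo_invo [simp]: "invo (invo x) = x"
  using compact_hypergroup by (simp add: compact_hypergroup_def)

lemma conv_comp_invo: "f \<in> CK \<Longrightarrow> conv x y (f \<circ> invo) = conv (invo y) (invo x) f"
  using compact_hypergroup by (simp add: compact_hypergroup_def)

lemma unit_in_msupp_conv_iff: "e \<in> msupp (conv x y) \<longleftrightarrow> x = invo y"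
  using compact_hypergroup by (simp add: compact_hypergroup_def)

lemma positive_lin_conv: "positive_lin (conv x y)"
  by (rule prob_fun_positive_lin[OF prob_conv])

lemma cmeasure_conv: "cmeasure (conv x y)"
  by (rule positive_lin_cmeasure[OF compact_UNIV positive_lin_conv])

lemma lin_on_CK_conv: "lin_on_CK (conv x y)"
  by (rule positive_lin_lin[OF positive_lin_conv])

lemma conv_const_1: "conv x y (\<lambda>_. 1) = 1"
  using prob_conv by (simp add: prob_fun_def)

lemma CK_conv_left: "f \<in> CK \<Longrightarrow> (\<lambda>y. conv x y f) \<in> CK"
  by (rule jointly_continuous_fix_fst[OF jointly_continuous_conv])

lemma CK_conv_right: "f \<in> CK \<Longrightarrow> (\<lambda>x. conv x y f) \<in> CK"
  by (rule jointly_continuous_fix_snd[OF jointly_continuous_conv])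

lemma CK_invo: "f \<in> CK \<Longrightarrow> (\<lambda>x. f (invo x)) \<in> CK"
  by (rule CK_compose[OF _ continuous_invo])

lemma open_msupp_conv_left_subset: "open U \<Longrightarrow> open {t. msupp (conv a t) \<subseteq> U}"
proof -
  assume "open U"
  have "continuous_on UNIV (\<lambda>t. (a, t))" by (intro continuous_intros)
  then have "open ((\<lambda>t. (a, t)) -` {p. msupp (conv (fst p) (snd p)) \<subseteq> U} \<inter> UNIV)"
    using open_msupp_conv_subset[OF \<open>open U\<close>] unfolding continuous_on_open_vimage[OF open_UNIV] by blast
  then show ?thesis by (simp add: vimage_def)
qed

lemma invo_in_msupp_conv:
  assumes w: "w \<in> msupp (conv a b)"
  shows "invo w \<in> msupp (conv (invo b) (invo a))"
proof (rule ccontr)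
  assume "invo w \<notin> msupp (conv (invo b) (invo a))"
  then obtain r :: "'a \<Rightarrow> real" where r: "continuous_on UNIV r" "\<forall>x. 0 \<le> r x" "r (invo w) = 1"
      "conv (invo b) (invo a) (\<lambda>x. complex_of_real (r x)) = 0"
    by (rule notin_msupp_witness[OF compact_UNIV])
  have r_invo: "continuous_on UNIV (\<lambda>x. r (invo x))"
    using continuous_on_compose2[OF r(1) continuous_invo] by simp
  have "conv a b (\<lambda>x. complex_of_real (r (invo x))) = 0"
    using conv_comp_invo[OF CK_of_real[OF r(1)], of a b] r(4) by (simp add: o_def)
  moreover have "conv a b (\<lambda>x. complex_of_real (r (invo x))) \<noteq> 0"
    using r_invo r(2,3)
    by (intro positive_lin_neq_0_on_msupp[OF compact_UNIV positive_lin_conv w] nonneg_CK_of_real) auto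
  ultimately show False by simp
qed

text \<open>Since \<open>e \<in> supp (\<delta>\<^sub>z * \<delta>\<^sub>z\<^sup>\<or>)\<close>, \<open>e\<close> lies in the support of
  \<open>(\<delta>\<^sub>a * \<delta>\<^sub>b) * \<delta>\<^sub>z\<^sup>\<or> = \<delta>\<^sub>a * (\<delta>\<^sub>b * \<delta>\<^sub>z\<^sup>\<or>)\<close>, so \<open>e \<in> supp (\<delta>\<^sub>a * \<delta>\<^sub>t)\<close>, i.e.
  \<open>t = a\<^sup>\<or>\<close>, for some \<open>t \<in> supp (\<delta>\<^sub>b * \<delta>\<^sub>z\<^sup>\<or>)\<close>.\<close>
lemma reciprocity:
  assumes z: "z \<in> msupp (conv a b)"
  shows "a \<in> msupp (conv z (invo b))"
proof -
  have "e \<in> msupp (conv z (invo z))" using unit_in_msupp_conv_iff by simp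
  then have "e \<in> msupp (\<lambda>f. conv a b (\<lambda>w. conv w (invo z) f))"
    using msupp_mixture_supset[OF compact_UNIV positive_lin_conv positive_lin_conv CK_conv_right] z by blast
  also have "msupp (\<lambda>f. conv a b (\<lambda>w. conv w (invo z) f)) = msupp (\<lambda>f. conv b (invo z) (\<lambda>t. conv a t f))"
    by (rule msupp_cong) (simp add: conv_assoc)
  finally obtain t where t: "t \<in> msupp (conv b (invo z))" "e \<in> msupp (conv a t)"
    using msupp_mixture_subset[OF compact_UNIV positive_lin_conv positive_lin_conv CK_conv_left
        open_msupp_conv_left_subset] by blast
  then have "t = invo a" using unit_in_msupp_conv_iff by simp
  then show ?thesis using invo_in_msupp_conv[OF t(1)] by simp
qed

subsection \<open>Harmonic functions and their periods\<close>

definition harmonic :: "(('a \<Rightarrow> complex) \<Rightarrow> complex) \<Rightarrow> ('a \<Rightarrow> complex) \<Rightarrow> bool" where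
  "harmonic \<sigma> F \<longleftrightarrow> F \<in> CK \<and> (\<forall>z. \<sigma> (\<lambda>x. conv z x F) = F z)"

lemma harmonic_Re_Im:
  assumes \<sigma>: "positive_lin \<sigma>" and F: "harmonic \<sigma> F"
  shows "harmonic \<sigma> (\<lambda>v. complex_of_real (Re (F v)))" and "harmonic \<sigma> (\<lambda>v. complex_of_real (Im (F v)))"
proof -
  have F_CK: "F \<in> CK" using F by (simp add: harmonic_def)
  have "\<sigma> (\<lambda>x. conv z x (\<lambda>v. complex_of_real (Re (F v)))) = \<sigma> (\<lambda>x. complex_of_real (Re (conv z x F)))"
    "\<sigma> (\<lambda>x. conv z x (\<lambda>v. complex_of_real (Im (F v)))) = \<sigma> (\<lambda>x. complex_of_real (Im (conv z x F)))" for z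
    using positive_lin_Re_Im[OF positive_lin_conv F_CK] by simp_all
  moreover have "\<sigma> (\<lambda>x. complex_of_real (Re (conv z x F))) = complex_of_real (Re (F z))"
    "\<sigma> (\<lambda>x. complex_of_real (Im (conv z x F))) = complex_of_real (Im (F z))" for z
    using positive_lin_Re_Im[OF \<sigma> CK_conv_left[OF F_CK], of z] F by (simp_all add: harmonic_def)
  ultimately show "harmonic \<sigma> (\<lambda>v. complex_of_real (Re (F v)))" "harmonic \<sigma> (\<lambda>v. complex_of_real (Im (F v)))"
    unfolding harmonic_def using F_CK by (auto intro!: CK_of_real CK_continuous_Re CK_continuous_Im)
qed

definition energy :: "('a \<Rightarrow> real) \<Rightarrow> 'a \<Rightarrow> 'a \<Rightarrow> complex" where
  "energy u t x = conv t x (\<lambda>v. complex_of_real ((u v - u t)\<^sup>2))"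

text \<open>\<open>x \<in> periods u\<close> iff \<open>u \<equiv> u t\<close> on \<open>supp (\<delta>\<^sub>t * \<delta>\<^sub>x)\<close> for every \<open>t\<close>.\<close>
definition periods :: "('a \<Rightarrow> real) \<Rightarrow> 'a set" where
  "periods u = {x. \<forall>t. energy u t x = 0}"

context
  fixes u :: "'a \<Rightarrow> real"
  assumes u: "continuous_on UNIV u"
begin

lemma nonneg_CK_energy: "nonneg_CK (energy u t)"
  unfolding nonneg_CK_def
proof (rule conjI[OF _ allI])
  show "energy u t \<in> CK"
    unfolding energy_def[abs_def] by (rule CK_conv_left[OF nonneg_CK_CK[OF nonneg_CK_sq_dev[OF u]]])
  show "energy u t x = complex_of_real (Re (energy u t x)) \<and> 0 \<le> Re (energy u t x)" for x
    unfolding energy_def by (rule positive_lin_nonneg[OF positive_lin_conv nonneg_CK_sq_dev[OF u]])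
qed

lemma conv_sq_dev_eq:
  "conv t x (\<lambda>v. complex_of_real ((u v - c)\<^sup>2)) = conv t x (\<lambda>v. complex_of_real ((u v)\<^sup>2))
     - complex_of_real (2 * c) * conv t x (\<lambda>v. complex_of_real (u v)) + complex_of_real (c\<^sup>2)"
  using lin_on_CK_square_shift[OF lin_on_CK_conv u, of t x c] by (simp add: conv_const_1)

text \<open>Zero variance: if \<open>(\<delta>\<^sub>s * \<delta>\<^sub>y)((u - u s)\<^sup>2) = 0\<close>, the mean \<open>p\<close> of \<open>u\<close> is \<open>u s\<close> (as
  \<open>(u s - p)\<^sup>2 \<le> (\<delta>\<^sub>s * \<delta>\<^sub>y)((u - p)\<^sup>2) + (u s - p)\<^sup>2 = 0\<close>) and the second moment is \<open>(u s)\<^sup>2\<close>.\<close>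
lemma conv_sq_dev_if_energy_eq_0:
  assumes "energy u s y = 0"
  shows "conv s y (\<lambda>v. complex_of_real ((u v - c)\<^sup>2)) = complex_of_real ((u s - c)\<^sup>2)"
proof -
  define p where "p = Re (conv s y (\<lambda>v. complex_of_real (u v)))"
  define q where "q = Re (conv s y (\<lambda>v. complex_of_real ((u v)\<^sup>2)))"
  have moments: "conv s y (\<lambda>v. complex_of_real ((u v - c)\<^sup>2)) = complex_of_real (q - 2 * c * p + c\<^sup>2)" for c
  proof -
    have "conv s y (\<lambda>v. complex_of_real (u v)) = complex_of_real p"
      unfolding p_def by (rule positive_lin_real[OF positive_lin_conv u])
    moreover have "conv s y (\<lambda>v. complex_of_real ((u v)\<^sup>2)) = complex_of_real q"
      unfolding q_def by (rule positive_lin_real[OF positive_lin_conv]) (intro continuous_intros u)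
    ultimately show ?thesis using conv_sq_dev_eq[of s y c] by simp
  qed
  have "complex_of_real (q - 2 * u s * p + (u s)\<^sup>2) = 0"
    using assms unfolding energy_def moments .
  then have mean: "q - 2 * u s * p + (u s)\<^sup>2 = 0" by (simp only: of_real_eq_0_iff)
  have "0 \<le> Re (conv s y (\<lambda>v. complex_of_real ((u v - p)\<^sup>2)))"
    using positive_lin_nonneg[OF positive_lin_conv nonneg_CK_sq_dev[OF u]] by blast
  then have var: "0 \<le> q - 2 * p * p + p\<^sup>2" unfolding moments by simp
  have "(p - u s)\<^sup>2 = p\<^sup>2 - q" using mean by (simp add: power2_eq_square algebra_simps)
  then have "(p - u s)\<^sup>2 = 0" using var zero_le_power2[of "p - u s"] by (simp add: power2_eq_square)
  then have "p = u s" by simp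
  moreover from mean this have "q = (u s)\<^sup>2" by (simp add: power2_eq_square)
  ultimately show ?thesis using moments[of c] by (simp add: power2_eq_square algebra_simps)
qed

lemma conv_sq_dev_if_period:
  "y \<in> periods u \<Longrightarrow> conv s y (\<lambda>v. complex_of_real ((u v - c)\<^sup>2)) = complex_of_real ((u s - c)\<^sup>2)"
  by (rule conv_sq_dev_if_energy_eq_0) (simp add: periods_def)

lemma closed_periods: "closed (periods u)"
proof -
  have "periods u = (\<Inter>t. {x. energy u t x = 0})" by (auto simp: periods_def)
  moreover have "closed {x. energy u t x = 0}" for t
    using nonneg_CK_CK[OF nonneg_CK_energy, of t] unfolding CK_def
    by (intro closed_Collect_eq continuous_on_const) simp
  ultimately show ?thesis by auto
qed

lemma periods_conv:
  assumes x: "x \<in> periods u" and y: "y \<in> periods u" and w: "w \<in> msupp (conv x y)"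
  shows "w \<in> periods u"
  unfolding periods_def
proof (intro CollectI allI)
  fix t
  have "conv x y (energy u t) = conv t x (\<lambda>s. conv s y (\<lambda>v. complex_of_real ((u v - u t)\<^sup>2)))"
    unfolding energy_def[abs_def] using conv_assoc[OF nonneg_CK_CK[OF nonneg_CK_sq_dev[OF u]], of t x y] by simp
  also have "\<dots> = energy u t x"
    unfolding energy_def using conv_sq_dev_if_period[OF y] by simp
  also have "\<dots> = 0" using x by (simp add: periods_def)
  finally show "energy u t w = 0"
    using positive_lin_neq_0_on_msupp[OF compact_UNIV positive_lin_conv w nonneg_CK_energy] by blast
qed

lemma periods_invo:
  assumes x: "x \<in> periods u"
  shows "invo x \<in> periods u"
  unfolding periods_def
proof (intro CollectI allI)
  fix t
  have "complex_of_real ((u w - u t)\<^sup>2) = 0" if w: "w \<in> msupp (conv t (invo x))" for w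
  proof -
    have "t \<in> msupp (conv w x)" using reciprocity[OF w] by simp
    moreover have "conv w x (\<lambda>v. complex_of_real ((u v - u w)\<^sup>2)) = 0"
      using x by (simp add: periods_def energy_def)
    ultimately have "complex_of_real ((u t - u w)\<^sup>2) = 0"
      using positive_lin_neq_0_on_msupp[OF compact_UNIV positive_lin_conv _ nonneg_CK_sq_dev[OF u]] by blast
    then show ?thesis by (simp add: power2_commute)
  qed
  then show "energy u t (invo x) = 0" unfolding energy_def
    by (rule positive_lin_eq_0_if_vanishes_on_msupp[OF compact_UNIV positive_lin_conv nonneg_CK_sq_dev[OF u]])
qed

lemma sigma_energy_eq:
  assumes \<sigma>: "prob_fun \<sigma>" and h: "harmonic \<sigma> (\<lambda>v. complex_of_real (u v))"
  shows "\<sigma> (energy u z) = \<sigma> (\<lambda>x. conv z x (\<lambda>v. complex_of_real ((u v)\<^sup>2))) - complex_of_real ((u z)\<^sup>2)"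
proof -
  let ?u = "\<lambda>v. complex_of_real (u v)" and ?u2 = "\<lambda>v. complex_of_real ((u v)\<^sup>2)"
  have CK: "?u \<in> CK" "?u2 \<in> CK" by (intro CK_of_real continuous_intros u)+
  have "\<sigma> (energy u z) = \<sigma> (\<lambda>x. conv z x ?u2 - complex_of_real (2 * u z) * conv z x ?u + complex_of_real ((u z)\<^sup>2))"
    unfolding energy_def[abs_def] conv_sq_dev_eq ..
  also have "\<dots> = \<sigma> (\<lambda>x. conv z x ?u2) - complex_of_real (2 * u z) * \<sigma> (\<lambda>x. conv z x ?u)
      + complex_of_real ((u z)\<^sup>2) * \<sigma> (\<lambda>_. 1)"
    by (rule lin_on_CK_lincomb[OF positive_lin_lin[OF prob_fun_positive_lin[OF \<sigma>]] CK_conv_left CK_conv_left])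
      (fact CK)+
  also have "\<dots> = \<sigma> (\<lambda>x. conv z x ?u2) - complex_of_real ((u z)\<^sup>2)"
    using h \<sigma> by (simp add: harmonic_def prob_fun_def power2_eq_square)
  finally show ?thesis .
qed

end

lemma H_sigma_translate_harmonic:
  assumes \<mu>: "\<mu> \<in> H_sigma conv \<sigma>" and f: "f \<in> CK"
  shows "harmonic \<sigma> (\<lambda>z. \<mu> (\<lambda>y. conv z y f))"
proof -
  have cm: "cmeasure \<mu>" and inv: "\<And>g. g \<in> CK \<Longrightarrow> \<sigma> (\<lambda>x. \<mu> (\<lambda>y. conv x y g)) = \<mu> g"
    using \<mu> by (auto simp: H_sigma_def mconv_def)
  have "\<sigma> (\<lambda>x. conv z x (\<lambda>v. \<mu> (\<lambda>y. conv v y f))) = \<mu> (\<lambda>y. conv z y f)" for z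
  proof -
    have "\<sigma> (\<lambda>x. conv z x (\<lambda>v. \<mu> (\<lambda>y. conv v y f))) = \<sigma> (\<lambda>x. \<mu> (\<lambda>y. conv z x (\<lambda>v. conv v y f)))"
      using fubini[OF compact_UNIV compact_UNIV cm cmeasure_conv
          jointly_continuous_swap[OF jointly_continuous_conv[OF f]]] by simp
    also have "\<dots> = \<sigma> (\<lambda>x. \<mu> (\<lambda>y. conv x y (\<lambda>w. conv z w f)))"
      using conv_assoc[OF f, of z] by simp
    also have "\<dots> = \<mu> (\<lambda>y. conv z y f)"
      by (rule inv[OF CK_conv_left[OF f]])
    finally show ?thesis .
  qed
  then show ?thesis
    unfolding harmonic_def using CK_functional_param[OF compact_UNIV cm jointly_continuous_conv[OF f]] by blast
qed

end

section \<open>Haar measure\<close>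

locale haar_hypergroup = hypergroup +
  fixes \<omega> :: "('a \<Rightarrow> complex) \<Rightarrow> complex"
  assumes normalized_haar: "normalized_haar conv \<omega>"
begin

lemma prob_haar: "prob_fun \<omega>"
  using normalized_haar by (simp add: normalized_haar_def)

lemma positive_lin_haar: "positive_lin \<omega>"
  by (rule prob_fun_positive_lin[OF prob_haar])

lemma cmeasure_haar: "cmeasure \<omega>"
  by (rule positive_lin_cmeasure[OF compact_UNIV positive_lin_haar])

lemma haar_const_1: "\<omega> (\<lambda>_. 1) = 1"
  using prob_haar by (simp add: prob_fun_def)

lemma haar_left_invariant: "f \<in> CK \<Longrightarrow> \<omega> (\<lambda>y. conv x y f) = \<omega> f"
  using normalized_haar by (simp add: normalized_haar_def)

text \<open>The reflection \<open>\<omega>\<^sup>\<or>\<close> of \<open>\<omega>\<close> is right invariant; integrating a left invariant \<open>\<nu>\<close> against it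
  (Fubini) shows \<open>\<nu> = \<nu>(1) \<omega>\<^sup>\<or>\<close>, in particular \<open>\<omega> = \<omega>\<^sup>\<or>\<close>.\<close>
definition haar_reflected :: "('a \<Rightarrow> complex) \<Rightarrow> complex" where
  "haar_reflected f = \<omega> (\<lambda>x. f (invo x))"

lemma positive_lin_haar_reflected: "positive_lin haar_reflected"
proof -
  have "lin_on_CK haar_reflected"
    unfolding lin_on_CK_def haar_reflected_def
    using lin_on_CK_add[OF positive_lin_lin[OF positive_lin_haar] CK_invo CK_invo]
      lin_on_CK_cmult[OF positive_lin_lin[OF positive_lin_haar] CK_invo] by simp
  moreover have "positive_fun haar_reflected"
    unfolding positive_fun_def haar_reflected_def
  proof (intro ballI impI)
    fix f :: "'a \<Rightarrow> complex"
    assume "f \<in> CK" "\<forall>x. f x = complex_of_real (Re (f x)) \<and> 0 \<le> Re (f x)"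
    then have "nonneg_CK (\<lambda>x. f (invo x))" unfolding nonneg_CK_def using CK_invo by blast
    from positive_lin_nonneg[OF positive_lin_haar this]
    show "\<omega> (\<lambda>x. f (invo x)) = complex_of_real (Re (\<omega> (\<lambda>x. f (invo x)))) \<and> 0 \<le> Re (\<omega> (\<lambda>x. f (invo x)))" .
  qed
  ultimately show ?thesis by (simp add: positive_lin_def)
qed

lemma haar_reflected_right_invariant: "f \<in> CK \<Longrightarrow> haar_reflected (\<lambda>y. conv y x f) = haar_reflected f"
proof -
  assume f: "f \<in> CK"
  have "conv (invo y) x f = conv (invo x) y (f \<circ> invo)" for y
    using conv_comp_invo[OF f, of "invo x" y] by simp
  then have "haar_reflected (\<lambda>y. conv y x f) = \<omega> (\<lambda>y. conv (invo x) y (\<lambda>z. f (invo z)))"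
    unfolding haar_reflected_def by (simp add: o_def)
  also have "\<dots> = haar_reflected f"
    unfolding haar_reflected_def by (rule haar_left_invariant[OF CK_invo[OF f]])
  finally show ?thesis .
qed

lemma left_invariant_eq_multiple_reflected:
  assumes \<nu>: "cmeasure \<nu>" and inv: "\<And>z f. f \<in> CK \<Longrightarrow> \<nu> (\<lambda>y. conv z y f) = \<nu> f"
    and f: "f \<in> CK"
  shows "\<nu> f = \<nu> (\<lambda>_. 1) * haar_reflected f"
proof -
  have lin: "lin_on_CK haar_reflected" by (rule positive_lin_lin[OF positive_lin_haar_reflected])
  have "\<nu> f = haar_reflected (\<lambda>z. \<nu> f)"
    using lin_on_CK_const[OF lin, of "\<nu> f"] haar_const_1 by (simp add: haar_reflected_def)
  also have "\<dots> = haar_reflected (\<lambda>z. \<nu> (\<lambda>y. conv z y f))"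
    using inv[OF f] by simp
  also have "\<dots> = \<nu> (\<lambda>y. haar_reflected (\<lambda>z. conv z y f))"
    by (rule fubini[OF compact_UNIV compact_UNIV positive_lin_cmeasure[OF compact_UNIV positive_lin_haar_reflected]
          \<nu> jointly_continuous_conv[OF f]])
  also have "\<dots> = \<nu> (\<lambda>y. haar_reflected f)"
    using haar_reflected_right_invariant[OF f] by simp
  also have "\<dots> = haar_reflected f * \<nu> (\<lambda>_. 1)"
    by (rule lin_on_CK_const[OF cmeasure_lin[OF \<nu>]])
  finally show ?thesis by simp
qed

lemma haar_eq_reflected: "f \<in> CK \<Longrightarrow> \<omega> f = haar_reflected f"
  using left_invariant_eq_multiple_reflected[OF cmeasure_haar haar_left_invariant] haar_const_1 by simp

lemma haar_right_invariant: "f \<in> CK \<Longrightarrow> \<omega> (\<lambda>y. conv y x f) = \<omega> f"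
  using haar_eq_reflected haar_reflected_right_invariant CK_conv_right by metis

lemma left_invariant_eq_multiple:
  assumes "cmeasure \<nu>" "\<And>z f. f \<in> CK \<Longrightarrow> \<nu> (\<lambda>y. conv z y f) = \<nu> f" "f \<in> CK"
  shows "\<nu> f = \<nu> (\<lambda>_. 1) * \<omega> f"
  using left_invariant_eq_multiple_reflected[OF assms] haar_eq_reflected[OF assms(3)] by simp

lemma msupp_haar: "msupp \<omega> = UNIV"
proof (rule ccontr)
  assume "msupp \<omega> \<noteq> UNIV"
  then obtain v where "v \<notin> msupp \<omega>" by blast
  then obtain r :: "'a \<Rightarrow> real" where r: "continuous_on UNIV r" "\<forall>x. 0 \<le> r x" "r v = 1"
      "\<omega> (\<lambda>x. complex_of_real (r x)) = 0"
    by (rule notin_msupp_witness[OF compact_UNIV])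
  have r_nonneg: "nonneg_CK (\<lambda>x. complex_of_real (r x))" using r(1,2) by (intro nonneg_CK_of_real) auto
  obtain x where x: "x \<in> msupp \<omega>"
    using msupp_nonempty[OF compact_UNIV positive_lin_haar] haar_const_1 by fastforce
  obtain y where "y \<in> msupp (conv v (invo x))"
    using msupp_nonempty[OF compact_UNIV positive_lin_conv] conv_const_1 by fastforce
  then have "v \<in> msupp (conv y x)" using reciprocity by (metis invo_invo)
  then have "conv y x (\<lambda>x. complex_of_real (r x)) \<noteq> 0"
    using r(3) by (intro positive_lin_neq_0_on_msupp[OF compact_UNIV positive_lin_conv _ r_nonneg]) auto
  moreover have "nonneg_CK (\<lambda>t. conv y t (\<lambda>x. complex_of_real (r x)))"
    unfolding nonneg_CK_def
    using CK_conv_left[OF nonneg_CK_CK[OF r_nonneg]] positive_lin_nonneg[OF positive_lin_conv r_nonneg] by blast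
  ultimately have "\<omega> (\<lambda>t. conv y t (\<lambda>x. complex_of_real (r x))) \<noteq> 0"
    by (intro positive_lin_neq_0_on_msupp[OF compact_UNIV positive_lin_haar x])
  moreover have "\<omega> (\<lambda>t. conv y t (\<lambda>x. complex_of_real (r x))) = 0"
    using haar_left_invariant[OF nonneg_CK_CK[OF r_nonneg]] r(4) by simp
  ultimately show False by simp
qed

text \<open>Integrating the energy against the right invariant \<open>\<omega>\<close> gives \<open>\<omega>(P\<^sub>\<sigma>(u\<^sup>2)) - \<omega>(u\<^sup>2) = 0\<close>;
  being nonnegative and continuous, it vanishes on \<open>supp \<omega> = K\<close>.\<close>
lemma sigma_energy_eq_0:
  assumes \<sigma>: "prob_fun \<sigma>" and h: "harmonic \<sigma> (\<lambda>v. complex_of_real (u v))"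
  shows "\<sigma> (energy u z) = 0"
proof -
  let ?u2 = "\<lambda>v. complex_of_real ((u v)\<^sup>2)"
  have u: "continuous_on UNIV u" using h by (simp add: harmonic_def continuous_on_if_of_real_CK)
  have u2: "?u2 \<in> CK" by (intro CK_of_real continuous_intros u)
  have cm: "cmeasure \<sigma>" by (rule positive_lin_cmeasure[OF compact_UNIV prob_fun_positive_lin[OF \<sigma>]])
  have P_u2: "(\<lambda>z. \<sigma> (\<lambda>x. conv z x ?u2)) \<in> CK"
    by (rule CK_functional_param[OF compact_UNIV cm jointly_continuous_conv[OF u2]])
  have "nonneg_CK (\<lambda>z. \<sigma> (energy u z))"
    unfolding nonneg_CK_def
  proof (rule conjI[OF _ allI])
    show "(\<lambda>z. \<sigma> (energy u z)) \<in> CK"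
      using CK_diff[OF P_u2 u2] by (simp only: sigma_energy_eq[OF u \<sigma> h])
    show "\<sigma> (energy u z) = complex_of_real (Re (\<sigma> (energy u z))) \<and> 0 \<le> Re (\<sigma> (energy u z))" for z
      by (rule positive_lin_nonneg[OF prob_fun_positive_lin[OF \<sigma>] nonneg_CK_energy[OF u]])
  qed
  moreover have "\<omega> (\<lambda>z. \<sigma> (energy u z)) = 0"
  proof -
    have "\<omega> (\<lambda>z. \<sigma> (energy u z)) = \<omega> (\<lambda>z. \<sigma> (\<lambda>x. conv z x ?u2)) - \<omega> ?u2"
      unfolding sigma_energy_eq[OF u \<sigma> h]
      by (rule lin_on_CK_diff[OF positive_lin_lin[OF positive_lin_haar] P_u2 u2])
    also have "\<omega> (\<lambda>z. \<sigma> (\<lambda>x. conv z x ?u2)) = \<sigma> (\<lambda>x. \<omega> (\<lambda>z. conv z x ?u2))"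
      by (rule fubini[OF compact_UNIV compact_UNIV cmeasure_haar cm jointly_continuous_conv[OF u2]])
    also have "\<dots> = \<omega> ?u2"
      using haar_right_invariant[OF u2] lin_on_CK_const[OF positive_lin_lin[OF prob_fun_positive_lin[OF \<sigma>]], of "\<omega> ?u2"] \<sigma>
      by (simp add: prob_fun_def)
    finally show ?thesis by simp
  qed
  ultimately show ?thesis
    using positive_lin_neq_0_on_msupp[OF compact_UNIV positive_lin_haar] msupp_haar by blast
qed

lemma harmonic_real_const:
  assumes \<sigma>: "prob_fun \<sigma>" "adapted conv invo \<sigma>" and h: "harmonic \<sigma> (\<lambda>v. complex_of_real (u v))"
  shows "u x = u e"
proof -
  have u: "continuous_on UNIV u" using h by (simp add: harmonic_def continuous_on_if_of_real_CK)
  have "msupp \<sigma> \<subseteq> periods u"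
  proof
    fix s assume s: "s \<in> msupp \<sigma>"
    have "energy u t s = 0" for t
      using sigma_energy_eq_0[OF \<sigma>(1) h, of t]
        positive_lin_neq_0_on_msupp[OF compact_UNIV prob_fun_positive_lin[OF \<sigma>(1)] s nonneg_CK_energy[OF u]]
      by blast
    then show "s \<in> periods u" by (simp add: periods_def)
  qed
  then have "periods u = UNIV"
    using periods_invo[OF u] periods_conv[OF u]
    by (intro adapted_closed_subset_eq_UNIV[OF \<sigma>(2) closed_periods[OF u]]) blast+
  then have "energy u e x = 0" unfolding periods_def by blast
  then have "complex_of_real ((u x - u e)\<^sup>2) = 0"
    unfolding energy_def conv_unit_left[OF nonneg_CK_CK[OF nonneg_CK_sq_dev[OF u]]] .
  then show ?thesis by simp
qed

lemma harmonic_const: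
  assumes "prob_fun \<sigma>" "adapted conv invo \<sigma>" "harmonic \<sigma> F"
  shows "F x = F e"
  using harmonic_real_const[OF assms(1,2) harmonic_Re_Im(1)[OF prob_fun_positive_lin[OF assms(1)] assms(3)],
      where x = x]
    harmonic_real_const[OF assms(1,2) harmonic_Re_Im(2)[OF prob_fun_positive_lin[OF assms(1)] assms(3)],
      where x = x]
  by (simp add: complex_eq_iff)

lemma H_sigma_eq_multiple_haar:
  assumes "prob_fun \<sigma>" "adapted conv invo \<sigma>" and \<mu>: "\<mu> \<in> H_sigma conv \<sigma>" and f: "f \<in> CK"
  shows "\<mu> f = \<mu> (\<lambda>_. 1) * \<omega> f"
proof (rule left_invariant_eq_multiple[OF _ _ f])
  show "cmeasure \<mu>" using \<mu> by (simp add: H_sigma_def)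
  show "\<mu> (\<lambda>y. conv z y g) = \<mu> g" if g: "g \<in> CK" for z g
  proof -
    have "\<mu> (\<lambda>y. conv z y g) = \<mu> (\<lambda>y. conv e y g)"
      by (rule harmonic_const[OF assms(1,2) H_sigma_translate_harmonic[OF \<mu> g]])
    also have "\<dots> = \<mu> g" by (simp add: conv_unit_left[OF g])
    finally show ?thesis .
  qed
qed

lemma haar_multiple_in_H_sigma:
  assumes \<sigma>: "prob_fun \<sigma>" and \<mu>: "cmeasure \<mu>" "\<And>f. f \<in> CK \<Longrightarrow> \<mu> f = c * \<omega> f"
  shows "\<mu> \<in> H_sigma conv \<sigma>"
proof -
  have "mconv conv \<sigma> \<mu> f = \<mu> f" if f: "f \<in> CK" for f
  proof -
    have "mconv conv \<sigma> \<mu> f = \<sigma> (\<lambda>x. c * \<omega> f)"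
      using \<mu>(2)[OF CK_conv_left[OF f]] haar_left_invariant[OF f] by (simp add: mconv_def)
    also have "\<dots> = \<mu> f"
      using lin_on_CK_const[OF positive_lin_lin[OF prob_fun_positive_lin[OF \<sigma>]], of "c * \<omega> f"] \<sigma> \<mu>(2)[OF f]
      by (simp add: prob_fun_def)
    finally show ?thesis .
  qed
  then show ?thesis using \<mu>(1) by (simp add: H_sigma_def)
qed

end

theorem theorem4p18:
  fixes conv :: "'a::t2_space \<Rightarrow> 'a \<Rightarrow> ('a \<Rightarrow> complex) \<Rightarrow> complex"
    and e :: 'a and invo :: "'a \<Rightarrow> 'a"
    and \<omega> \<sigma> :: "('a \<Rightarrow> complex) \<Rightarrow> complex"
  assumes "compact_hypergroup conv e invo"
    and "normalized_haar conv \<omega>"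
    and "prob_fun \<sigma>"
    and "adapted conv invo \<sigma>"
  shows "H_sigma conv \<sigma> = {\<mu>. cmeasure \<mu> \<and> (\<exists>c::complex. \<forall>f\<in>CK. \<mu> f = c * \<omega> f)}"
proof -
  interpret haar_hypergroup conv e invo \<omega>
    using assms(1,2) by (intro haar_hypergroup.intro hypergroup.intro haar_hypergroup_axioms.intro)
  show ?thesis
  proof (intro set_eqI iffI)
    fix \<mu> assume \<mu>: "\<mu> \<in> H_sigma conv \<sigma>"
    then have "cmeasure \<mu>" by (simp add: H_sigma_def)
    then show "\<mu> \<in> {\<mu>. cmeasure \<mu> \<and> (\<exists>c. \<forall>f\<in>CK. \<mu> f = c * \<omega> f)}"
      using H_sigma_eq_multiple_haar[OF assms(3,4) \<mu>] by blast
  next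
    fix \<mu> assume "\<mu> \<in> {\<mu>. cmeasure \<mu> \<and> (\<exists>c. \<forall>f\<in>CK. \<mu> f = c * \<omega> f)}"
    then obtain c where "cmeasure \<mu>" "\<And>f. f \<in> CK \<Longrightarrow> \<mu> f = c * \<omega> f" by blast
    then show "\<mu> \<in> H_sigma conv \<sigma>" by (rule haar_multiple_in_H_sigma[OF assms(3)])
  qed
qed

end
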